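(* Let $\mathcal C$ and $\mathcal D$ be sites whose topologies are generated by cd-structures $P_{\mathcal C}$ and $P_{\mathcal D}$ respectively, and let $u:\mathcal C\to\mathcal D$ be a functor. (a) Assume that $P_{\mathcal C}$ is complete and that $u$ preserves the fibre products involved in base changes along morphisms belonging to covering families of $\mathcal C$. Then $u$ is continuous if and only if, for every distinguished square $Q\in P_{\mathcal C}$, the family $\{u(Q(01))\to u(Q(11)),u(Q(10))\to u(Q(11))\}$ is a cover in $\mathcal D$. (b) Assume that (1) $P_{\mathcal D}$ is complete, and (2) for any $X'\in\mathcal C$ and any distinguished square $Q\in P_{\mathcal D}$ with $Q(11)=u(X')$, there exists $Q'\in P_{\mathcal C}$ with $u(Q')=Q$ and $Q'(11)=X'$. Then $u$ is cocontinuous.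
   Context: A cd-structure on a category is a class $P$ of commutative squares $Q$ with vertices $Q(00)\to Q(01)\to Q(11)$, $Q(00)\to Q(10)\to Q(11)$ (distinguished squares); the topology generated by $P$ is the Grothendieck topology generated by the elementary covers $\{Q(01)\to Q(11),Q(10)\to Q(11)\}$, $Q\in P$. Simple covers are defined inductively: a family consisting of a single isomorphism is simple, and if $Q\in P$ and $\{Y_s\to Q(01)\}$, $\{A_t\to Q(10)\}$ are simple covers then $\{Y_s\to Q(01)\to Q(11),A_t\to Q(10)\to Q(11)\}$ is simple. $P$ is complete if every covering sieve of the generated topology contains the sieve generated by a simple cover. A functor $u:\mathcal C\to\mathcal D$ of sites is continuous if $u^*:\widehat{\mathcal D}\to\widehat{\mathcal C}$ (precomposition on presheaves of sets) sends sheaves to sheaves, and cocontinuous if the right adjoint $u_*$ of $u^*$ sends sheaves to sheaves; equivalently, $u$ is cocontinuous iff for every $X\in\mathcal C$ and every cover $\{V_i\to u(X)\}$ in $\mathcal D$ there is a cover $\{U_j\to X\}$ in $\mathcal C$ such that each $u(U_j)\to u(X)$ factors through some $V_i$. Sites are assumed to be $U$-sites in the sense of SGA4. *)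

theory Defs
  imports Main
begin

text \<open>A category: objects, arrows, domain, codomain, identities and composition
  (Comp g f is the composite g after f, defined when Cod f = Dom g).\<close>
record ('o,'m) cat =
  Obj  :: "'o set"
  Arr  :: "'m set"
  Dom  :: "'m \<Rightarrow> 'o"
  Cod  :: "'m \<Rightarrow> 'o"
  Idm  :: "'o \<Rightarrow> 'm"
  Comp :: "'m \<Rightarrow> 'm \<Rightarrow> 'm"

definition is_cat :: "('o,'m) cat \<Rightarrow> bool" where
  "is_cat C \<longleftrightarrow>
     (\<forall>f\<in>Arr C. Dom C f \<in> Obj C \<and> Cod C f \<in> Obj C) \<and>
     (\<forall>X\<in>Obj C. Idm C X \<in> Arr C \<and> Dom C (Idm C X) = X \<and> Cod C (Idm C X) = X) \<and>
     (\<forall>f\<in>Arr C. \<forall>g\<in>Arr C. Cod C f = Dom C g \<longrightarrow>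
        Comp C g f \<in> Arr C \<and> Dom C (Comp C g f) = Dom C f \<and> Cod C (Comp C g f) = Cod C g) \<and>
     (\<forall>f\<in>Arr C. \<forall>g\<in>Arr C. \<forall>h\<in>Arr C. Cod C f = Dom C g \<and> Cod C g = Dom C h \<longrightarrow>
        Comp C h (Comp C g f) = Comp C (Comp C h g) f) \<and>
     (\<forall>f\<in>Arr C. Comp C f (Idm C (Dom C f)) = f \<and> Comp C (Idm C (Cod C f)) f = f)"

definition is_iso :: "('o,'m) cat \<Rightarrow> 'm \<Rightarrow> bool" where
  "is_iso C f \<longleftrightarrow> f \<in> Arr C \<and> (\<exists>g\<in>Arr C. Dom C g = Cod C f \<and> Cod C g = Dom C f \<and>
      Comp C g f = Idm C (Dom C f) \<and> Comp C f g = Idm C (Cod C f))"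

definition is_functor :: "('o,'m) cat \<Rightarrow> ('p,'n) cat \<Rightarrow> ('o \<Rightarrow> 'p) \<Rightarrow> ('m \<Rightarrow> 'n) \<Rightarrow> bool" where
  "is_functor C D uo um \<longleftrightarrow>
     (\<forall>X\<in>Obj C. uo X \<in> Obj D \<and> um (Idm C X) = Idm D (uo X)) \<and>
     (\<forall>f\<in>Arr C. um f \<in> Arr D \<and> Dom D (um f) = uo (Dom C f) \<and> Cod D (um f) = uo (Cod C f)) \<and>
     (\<forall>f\<in>Arr C. \<forall>g\<in>Arr C. Cod C f = Dom C g \<longrightarrow> um (Comp C g f) = Comp D (um g) (um f))"

definition is_pullback :: "('o,'m) cat \<Rightarrow> 'm \<Rightarrow> 'm \<Rightarrow> 'm \<Rightarrow> 'm \<Rightarrow> bool" where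
  "is_pullback C p1 p2 f g \<longleftrightarrow>
     p1 \<in> Arr C \<and> p2 \<in> Arr C \<and> f \<in> Arr C \<and> g \<in> Arr C \<and>
     Cod C p1 = Dom C f \<and> Cod C p2 = Dom C g \<and> Dom C p1 = Dom C p2 \<and> Cod C f = Cod C g \<and>
     Comp C f p1 = Comp C g p2 \<and>
     (\<forall>q1\<in>Arr C. \<forall>q2\<in>Arr C. Cod C q1 = Dom C f \<and> Cod C q2 = Dom C g \<and> Dom C q1 = Dom C q2 \<and>
        Comp C f q1 = Comp C g q2 \<longrightarrow>
        (\<exists>!h. h \<in> Arr C \<and> Dom C h = Dom C q1 \<and> Cod C h = Dom C p1 \<and>
               Comp C p1 h = q1 \<and> Comp C p2 h = q2))"

definition is_sieve :: "('o,'m) cat \<Rightarrow> 'o \<Rightarrow> 'm set \<Rightarrow> bool" where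
  "is_sieve C X S \<longleftrightarrow> S \<subseteq> Arr C \<and> (\<forall>f\<in>S. Cod C f = X) \<and>
     (\<forall>f\<in>S. \<forall>g\<in>Arr C. Cod C g = Dom C f \<longrightarrow> Comp C f g \<in> S)"

definition max_sieve :: "('o,'m) cat \<Rightarrow> 'o \<Rightarrow> 'm set" where
  "max_sieve C X = {f \<in> Arr C. Cod C f = X}"

definition pb_sieve :: "('o,'m) cat \<Rightarrow> 'm \<Rightarrow> 'm set \<Rightarrow> 'm set" where
  "pb_sieve C f S = {g \<in> Arr C. Cod C g = Dom C f \<and> Comp C f g \<in> S}"

definition sieve_gen :: "('o,'m) cat \<Rightarrow> 'm set \<Rightarrow> 'm set" where
  "sieve_gen C R = {Comp C f g | f g. f \<in> R \<and> g \<in> Arr C \<and> Cod C g = Dom C f}"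

definition is_topology :: "('o,'m) cat \<Rightarrow> ('o \<Rightarrow> 'm set set) \<Rightarrow> bool" where
  "is_topology C J \<longleftrightarrow>
     (\<forall>X. \<forall>S\<in>J X. X \<in> Obj C \<and> is_sieve C X S) \<and>
     (\<forall>X\<in>Obj C. max_sieve C X \<in> J X) \<and>
     (\<forall>X S f. S \<in> J X \<and> f \<in> Arr C \<and> Cod C f = X \<longrightarrow> pb_sieve C f S \<in> J (Dom C f)) \<and>
     (\<forall>X S R. S \<in> J X \<and> is_sieve C X R \<and> (\<forall>f\<in>S. pb_sieve C f R \<in> J (Dom C f)) \<longrightarrow> R \<in> J X)"

definition gen_topology :: "('o,'m) cat \<Rightarrow> ('o \<Rightarrow> 'm set set) \<Rightarrow> 'o \<Rightarrow> 'm set set" where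
  "gen_topology C E X = {S. \<forall>J. is_topology C J \<and> (\<forall>Y. \<forall>R\<in>E Y. sieve_gen C R \<in> J Y) \<longrightarrow> S \<in> J X}"

definition covering_family :: "('o,'m) cat \<Rightarrow> ('o \<Rightarrow> 'm set set) \<Rightarrow> 'o \<Rightarrow> 'm set \<Rightarrow> bool" where
  "covering_family C J X R \<longleftrightarrow> R \<subseteq> Arr C \<and> (\<forall>f\<in>R. Cod C f = X) \<and> sieve_gen C R \<in> J X"

text \<open>A square Q = (a,b,c,d) with a : Q00 \<rightarrow> Q01, b : Q01 \<rightarrow> Q11,
  c : Q00 \<rightarrow> Q10, d : Q10 \<rightarrow> Q11, commuting: b \<circ> a = d \<circ> c.\<close>
type_synonym 'm square = "'m \<times> 'm \<times> 'm \<times> 'm"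

fun sq_a :: "'m square \<Rightarrow> 'm" where "sq_a (a,b,c,d) = a"
fun sq_b :: "'m square \<Rightarrow> 'm" where "sq_b (a,b,c,d) = b"
fun sq_c :: "'m square \<Rightarrow> 'm" where "sq_c (a,b,c,d) = c"
fun sq_d :: "'m square \<Rightarrow> 'm" where "sq_d (a,b,c,d) = d"

definition sq11 :: "('o,'m) cat \<Rightarrow> 'm square \<Rightarrow> 'o" where "sq11 C Q = Cod C (sq_b Q)"
definition sq01 :: "('o,'m) cat \<Rightarrow> 'm square \<Rightarrow> 'o" where "sq01 C Q = Dom C (sq_b Q)"
definition sq10 :: "('o,'m) cat \<Rightarrow> 'm square \<Rightarrow> 'o" where "sq10 C Q = Dom C (sq_d Q)"

fun map_sq :: "('m \<Rightarrow> 'n) \<Rightarrow> 'm square \<Rightarrow> 'n square" where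
  "map_sq u (a,b,c,d) = (u a, u b, u c, u d)"

definition is_square :: "('o,'m) cat \<Rightarrow> 'm square \<Rightarrow> bool" where
  "is_square C Q \<longleftrightarrow> sq_a Q \<in> Arr C \<and> sq_b Q \<in> Arr C \<and> sq_c Q \<in> Arr C \<and> sq_d Q \<in> Arr C \<and>
     Cod C (sq_a Q) = Dom C (sq_b Q) \<and> Cod C (sq_c Q) = Dom C (sq_d Q) \<and>
     Dom C (sq_a Q) = Dom C (sq_c Q) \<and> Cod C (sq_b Q) = Cod C (sq_d Q) \<and>
     Comp C (sq_b Q) (sq_a Q) = Comp C (sq_d Q) (sq_c Q)"

definition cd_structure :: "('o,'m) cat \<Rightarrow> 'm square set \<Rightarrow> bool" where
  "cd_structure C P \<longleftrightarrow> (\<forall>Q\<in>P. is_square C Q)"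

definition elem_covers :: "('o,'m) cat \<Rightarrow> 'm square set \<Rightarrow> 'o \<Rightarrow> 'm set set" where
  "elem_covers C P X = {{sq_b Q, sq_d Q} | Q. Q \<in> P \<and> sq11 C Q = X}"

definition cd_topology :: "('o,'m) cat \<Rightarrow> 'm square set \<Rightarrow> 'o \<Rightarrow> 'm set set" where
  "cd_topology C P = gen_topology C (elem_covers C P)"

inductive simple_cover :: "('o,'m) cat \<Rightarrow> 'm square set \<Rightarrow> 'o \<Rightarrow> 'm set \<Rightarrow> bool"
  for C P where
  iso: "is_iso C f \<Longrightarrow> simple_cover C P (Cod C f) {f}"
| step: "Q \<in> P \<Longrightarrow> simple_cover C P (sq01 C Q) R1 \<Longrightarrow> simple_cover C P (sq10 C Q) R2 \<Longrightarrow>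
     simple_cover C P (sq11 C Q)
       ((\<lambda>y. Comp C (sq_b Q) y) ` R1 \<union> (\<lambda>t. Comp C (sq_d Q) t) ` R2)"

definition cd_complete :: "('o,'m) cat \<Rightarrow> 'm square set \<Rightarrow> bool" where
  "cd_complete C P \<longleftrightarrow> (\<forall>X S. S \<in> cd_topology C P X \<longrightarrow>
     (\<exists>R. simple_cover C P X R \<and> sieve_gen C R \<subseteq> S))"

text \<open>A presheaf of sets with values in (subsets of) the type 'v:
  F0 X is the set of sections over X, F1 f the restriction map F(Cod f) \<rightarrow> F(Dom f).\<close>
definition is_presheaf :: "('o,'m) cat \<Rightarrow> ('o \<Rightarrow> 'v set) \<Rightarrow> ('m \<Rightarrow> 'v \<Rightarrow> 'v) \<Rightarrow> bool" where
  "is_presheaf C F0 F1 \<longleftrightarrow>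
     (\<forall>f\<in>Arr C. \<forall>x\<in>F0 (Cod C f). F1 f x \<in> F0 (Dom C f)) \<and>
     (\<forall>X\<in>Obj C. \<forall>x\<in>F0 X. F1 (Idm C X) x = x) \<and>
     (\<forall>f\<in>Arr C. \<forall>g\<in>Arr C. Cod C f = Dom C g \<longrightarrow>
        (\<forall>x\<in>F0 (Cod C g). F1 (Comp C g f) x = F1 f (F1 g x)))"

definition is_sheaf :: "('o,'m) cat \<Rightarrow> ('o \<Rightarrow> 'm set set) \<Rightarrow> ('o \<Rightarrow> 'v set) \<Rightarrow> ('m \<Rightarrow> 'v \<Rightarrow> 'v) \<Rightarrow> bool" where
  "is_sheaf C J F0 F1 \<longleftrightarrow> is_presheaf C F0 F1 \<and>
     (\<forall>X S s. S \<in> J X \<and> (\<forall>f\<in>S. s f \<in> F0 (Dom C f)) \<and>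
        (\<forall>f\<in>S. \<forall>g\<in>Arr C. Cod C g = Dom C f \<longrightarrow> s (Comp C f g) = F1 g (s f)) \<longrightarrow>
        (\<exists>!x. x \<in> F0 X \<and> (\<forall>f\<in>S. F1 f x = s f)))"

definition continuous_site :: "'v itself \<Rightarrow> ('o,'m) cat \<Rightarrow> ('o \<Rightarrow> 'm set set) \<Rightarrow>
    ('p,'n) cat \<Rightarrow> ('p \<Rightarrow> 'n set set) \<Rightarrow> ('o \<Rightarrow> 'p) \<Rightarrow> ('m \<Rightarrow> 'n) \<Rightarrow> bool" where
  "continuous_site _ C JC D JD uo um \<longleftrightarrow>
     (\<forall>(G0 :: 'p \<Rightarrow> 'v set) G1. is_sheaf D JD G0 G1 \<longrightarrow> is_sheaf C JC (G0 \<circ> uo) (G1 \<circ> um))"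

text \<open>Cocontinuity, via the characterization given in the paper's context.\<close>
definition cocontinuous_site :: "('o,'m) cat \<Rightarrow> ('o \<Rightarrow> 'm set set) \<Rightarrow>
    ('p,'n) cat \<Rightarrow> ('p \<Rightarrow> 'n set set) \<Rightarrow> ('o \<Rightarrow> 'p) \<Rightarrow> ('m \<Rightarrow> 'n) \<Rightarrow> bool" where
  "cocontinuous_site C JC D JD uo um \<longleftrightarrow>
     (\<forall>X\<in>Obj C. \<forall>R. covering_family D JD (uo X) R \<longrightarrow>
        (\<exists>R'. covering_family C JC X R' \<and>
           (\<forall>g\<in>R'. \<exists>f\<in>R. \<exists>h\<in>Arr D. Cod D h = Dom D f \<and> um g = Comp D f h)))"

definition preserves_cover_pullbacks :: "('o,'m) cat \<Rightarrow> ('o \<Rightarrow> 'm set set) \<Rightarrow>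
    ('p,'n) cat \<Rightarrow> ('m \<Rightarrow> 'n) \<Rightarrow> bool" where
  "preserves_cover_pullbacks C JC D um \<longleftrightarrow>
     (\<forall>X R f g. covering_family C JC X R \<and> f \<in> R \<and> g \<in> Arr C \<and> Cod C g = X \<longrightarrow>
        (\<exists>p1 p2. is_pullback C p1 p2 f g) \<and>
        (\<forall>p1 p2. is_pullback C p1 p2 f g \<longrightarrow> is_pullback D (um p1) (um p2) (um f) (um g)))"

end

theory Submission
  imports Defs
begin

text \<open>
  (a) For a complete cd-structure the sheaf condition only has to be checked on the elementary
  covers: by induction over simple covers, a presheaf that is a sheaf for every sieve generated by
  \<open>{Q(01) \<rightarrow> Q(11), Q(10) \<rightarrow> Q(11)}\<close> is first separated and then a sheaf for every covering sieve.
  If G is a sheaf on D, then \<open>u\<^sup>*G\<close> satisfies this condition: the image square covers, and two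
  local sections over the image square agree on overlaps because every overlap factors through
  the image of the fibre product, which u preserves. Conversely, if u is continuous, the pullback
  along u of the sheaf \<open>\<Omega>\<close> of closed sieves on D is a sheaf; the closure of the image sieve and the
  maximal sieve restrict to the same section along the elementary cover, hence coincide, so the
  image sieve covers.

  (b) By completeness every cover of \<open>u(X)\<close> is refined by a simple cover, and a simple cover lifts
  square by square along u to a simple cover of X.
\<close>

section \<open>Sieves\<close>

locale category =
  fixes C :: "('o,'m) cat"
  assumes is_cat: "is_cat C"
begin

lemma Dom_in_Obj [simp]: "f \<in> Arr C \<Longrightarrow> Dom C f \<in> Obj C"
  and Cod_in_Obj [simp]: "f \<in> Arr C \<Longrightarrow> Cod C f \<in> Obj C"
  and Idm_in_Arr [simp]: "X \<in> Obj C \<Longrightarrow> Idm C X \<in> Arr C"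
  and Dom_Idm [simp]: "X \<in> Obj C \<Longrightarrow> Dom C (Idm C X) = X"
  and Cod_Idm [simp]: "X \<in> Obj C \<Longrightarrow> Cod C (Idm C X) = X"
  using is_cat unfolding is_cat_def by blast+

lemma Comp_Idm_right [simp]: "f \<in> Arr C \<Longrightarrow> Dom C f = X \<Longrightarrow> Comp C f (Idm C X) = f"
  and Comp_Idm_left [simp]: "f \<in> Arr C \<Longrightarrow> Cod C f = X \<Longrightarrow> Comp C (Idm C X) f = f"
  using is_cat unfolding is_cat_def by blast+

lemma Comp_in_Arr [simp]: "f \<in> Arr C \<Longrightarrow> g \<in> Arr C \<Longrightarrow> Cod C f = Dom C g \<Longrightarrow> Comp C g f \<in> Arr C"
  and Dom_Comp [simp]: "f \<in> Arr C \<Longrightarrow> g \<in> Arr C \<Longrightarrow> Cod C f = Dom C g \<Longrightarrow> Dom C (Comp C g f) = Dom C f"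
  and Cod_Comp [simp]: "f \<in> Arr C \<Longrightarrow> g \<in> Arr C \<Longrightarrow> Cod C f = Dom C g \<Longrightarrow> Cod C (Comp C g f) = Cod C g"
  using is_cat unfolding is_cat_def by blast+

lemma Comp_assoc:
  "\<lbrakk>f \<in> Arr C; g \<in> Arr C; h \<in> Arr C; Cod C f = Dom C g; Cod C g = Dom C h\<rbrakk> \<Longrightarrow>
    Comp C h (Comp C g f) = Comp C (Comp C h g) f"
  using is_cat unfolding is_cat_def by blast

lemma is_isoE:
  assumes "is_iso C f"
  obtains g where "f \<in> Arr C" "g \<in> Arr C" "Dom C g = Cod C f" "Cod C g = Dom C f"
    "Comp C f g = Idm C (Cod C f)"
  using assms unfolding is_iso_def by blast

lemma is_iso_Idm: "X \<in> Obj C \<Longrightarrow> is_iso C (Idm C X)"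
  unfolding is_iso_def by (intro conjI bexI[of _ "Idm C X"]) auto

lemma is_sieveD:
  assumes "is_sieve C X S" "f \<in> S"
  shows "f \<in> Arr C" "Cod C f = X"
  using assms unfolding is_sieve_def by auto

lemma is_sieve_Comp:
  "is_sieve C X S \<Longrightarrow> f \<in> S \<Longrightarrow> g \<in> Arr C \<Longrightarrow> Cod C g = Dom C f \<Longrightarrow> Comp C f g \<in> S"
  unfolding is_sieve_def by blast

lemma sieve_genI: "f \<in> R \<Longrightarrow> g \<in> Arr C \<Longrightarrow> Cod C g = Dom C f \<Longrightarrow> Comp C f g \<in> sieve_gen C R"
  unfolding sieve_gen_def by blast

lemma sieve_genE:
  assumes "k \<in> sieve_gen C R"
  obtains f g where "f \<in> R" "g \<in> Arr C" "Cod C g = Dom C f" "k = Comp C f g"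
  using assms unfolding sieve_gen_def by blast

lemma sieve_gen_mono: "R \<subseteq> R' \<Longrightarrow> sieve_gen C R \<subseteq> sieve_gen C R'"
  unfolding sieve_gen_def by blast

lemma subset_sieve_gen: "R \<subseteq> Arr C \<Longrightarrow> R \<subseteq> sieve_gen C R"
proof
  fix f assume "R \<subseteq> Arr C" "f \<in> R"
  then show "f \<in> sieve_gen C R"
    using sieve_genI[of f R "Idm C (Dom C f)"] by auto
qed

lemma sieve_gen_least:
  assumes "is_sieve C X S" "R \<subseteq> S"
  shows "sieve_gen C R \<subseteq> S"
proof
  fix k assume "k \<in> sieve_gen C R"
  then obtain f g where "f \<in> R" "g \<in> Arr C" "Cod C g = Dom C f" "k = Comp C f g"
    by (rule sieve_genE)
  with assms show "k \<in> S" using is_sieve_Comp by blast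
qed

lemma sieve_gen_is_sieve:
  assumes R: "R \<subseteq> Arr C" "\<forall>f\<in>R. Cod C f = X"
  shows "is_sieve C X (sieve_gen C R)"
  unfolding is_sieve_def
proof (intro conjI ballI impI subsetI)
  fix k assume "k \<in> sieve_gen C R"
  then obtain f h where "f \<in> R" "h \<in> Arr C" "Cod C h = Dom C f" "k = Comp C f h"
    by (rule sieve_genE)
  with R show "k \<in> Arr C" "Cod C k = X" by auto
next
  fix k g assume k: "k \<in> sieve_gen C R" and g: "g \<in> Arr C" "Cod C g = Dom C k"
  from k obtain f h where fh: "f \<in> R" "h \<in> Arr C" "Cod C h = Dom C f" "k = Comp C f h"
    by (rule sieve_genE)
  with R have "f \<in> Arr C" by blast
  with fh g have "Comp C k g = Comp C f (Comp C h g)"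
    by (simp add: Comp_assoc)
  with fh g \<open>f \<in> Arr C\<close> show "Comp C k g \<in> sieve_gen C R"
    by (simp add: sieve_genI)
qed

lemma Comp_in_sieve_gen_image:
  assumes "k \<in> sieve_gen C R" "f \<in> Arr C" "R \<subseteq> Arr C" "\<forall>r\<in>R. Cod C r = Dom C f"
  shows "Comp C f k \<in> sieve_gen C (Comp C f ` R)"
  using assms(1)
proof (rule sieve_genE)
  fix r g assume "r \<in> R" "g \<in> Arr C" "Cod C g = Dom C r" "k = Comp C r g"
  moreover from this assms(2-4) have "r \<in> Arr C" "Cod C r = Dom C f" by auto
  ultimately show ?thesis
    using sieve_genI[of "Comp C f r" "Comp C f ` R" g] assms(2) by (simp add: Comp_assoc)
qed

lemma sieve_gen_subset_pb_sieve:
  assumes "f \<in> Arr C" "Rf \<subseteq> Arr C" "\<forall>r\<in>Rf. Cod C r = Dom C f" "Comp C f ` Rf \<subseteq> R"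
  shows "sieve_gen C Rf \<subseteq> pb_sieve C f (sieve_gen C R)"
proof
  fix k assume k: "k \<in> sieve_gen C Rf"
  then have "k \<in> Arr C" "Cod C k = Dom C f"
    using is_sieveD[OF sieve_gen_is_sieve[OF assms(2,3)]] by auto
  moreover have "Comp C f k \<in> sieve_gen C (Comp C f ` Rf)"
    using Comp_in_sieve_gen_image[OF k assms(1-3)] .
  ultimately show "k \<in> pb_sieve C f (sieve_gen C R)"
    using sieve_gen_mono[OF assms(4)] unfolding pb_sieve_def by blast
qed

lemma max_sieve_is_sieve: "is_sieve C X (max_sieve C X)"
  unfolding is_sieve_def max_sieve_def by auto

lemma pb_sieve_is_sieve:
  assumes "is_sieve C X S" "f \<in> Arr C" "Cod C f = X"
  shows "is_sieve C (Dom C f) (pb_sieve C f S)"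
  unfolding is_sieve_def
proof (intro conjI ballI impI)
  fix h g assume h: "h \<in> pb_sieve C f S" and g: "g \<in> Arr C" "Cod C g = Dom C h"
  then have "h \<in> Arr C" "Cod C h = Dom C f" "Comp C f h \<in> S"
    unfolding pb_sieve_def by auto
  moreover have "Comp C (Comp C f h) g \<in> S"
    using is_sieve_Comp[OF assms(1) \<open>Comp C f h \<in> S\<close> g(1)] g(2) assms(2) \<open>h \<in> Arr C\<close> \<open>Cod C h = Dom C f\<close>
    by simp
  ultimately show "Comp C h g \<in> pb_sieve C f S"
    unfolding pb_sieve_def using g assms(2) by (simp add: Comp_assoc)
qed (auto simp: pb_sieve_def)

lemma pb_sieve_Comp:
  "f \<in> Arr C \<Longrightarrow> g \<in> Arr C \<Longrightarrow> Cod C g = Dom C f \<Longrightarrow>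
    pb_sieve C (Comp C f g) S = pb_sieve C g (pb_sieve C f S)"
  unfolding pb_sieve_def by (auto simp: Comp_assoc)

lemma pb_sieve_Idm: "is_sieve C X S \<Longrightarrow> X \<in> Obj C \<Longrightarrow> pb_sieve C (Idm C X) S = S"
  unfolding pb_sieve_def is_sieve_def by auto

lemma pb_sieve_of_mem: "is_sieve C X S \<Longrightarrow> f \<in> S \<Longrightarrow> pb_sieve C f S = max_sieve C (Dom C f)"
  unfolding pb_sieve_def max_sieve_def is_sieve_def by auto

lemma sieve_gen_iso:
  assumes "is_iso C f"
  shows "sieve_gen C {f} = max_sieve C (Cod C f)"
proof -
  obtain g where g: "f \<in> Arr C" "g \<in> Arr C" "Dom C g = Cod C f" "Cod C g = Dom C f"
    "Comp C f g = Idm C (Cod C f)"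
    using assms by (rule is_isoE)
  have "h \<in> sieve_gen C {f}" if "h \<in> Arr C" "Cod C h = Cod C f" for h
  proof -
    have "h = Comp C f (Comp C g h)"
      using g that by (simp add: Comp_assoc)
    then show ?thesis
      using sieve_genI[of f "{f}" "Comp C g h"] g that by simp
  qed
  moreover have "is_sieve C (Cod C f) (sieve_gen C {f})"
    using sieve_gen_is_sieve[of "{f}" "Cod C f"] g by simp
  ultimately show ?thesis
    unfolding max_sieve_def is_sieve_def by blast
qed

end

section \<open>Grothendieck topologies and cd-structures\<close>

lemma is_topologyD:
  assumes "is_topology C J"
  shows "S \<in> J X \<Longrightarrow> X \<in> Obj C"
    and "S \<in> J X \<Longrightarrow> is_sieve C X S"
    and "X \<in> Obj C \<Longrightarrow> max_sieve C X \<in> J X"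
    and "S \<in> J X \<Longrightarrow> f \<in> Arr C \<Longrightarrow> Cod C f = X \<Longrightarrow> pb_sieve C f S \<in> J (Dom C f)"
    and "S \<in> J X \<Longrightarrow> is_sieve C X R \<Longrightarrow> (\<And>f. f \<in> S \<Longrightarrow> pb_sieve C f R \<in> J (Dom C f)) \<Longrightarrow>
      R \<in> J X"
  using assms unfolding is_topology_def by blast+

lemma gen_topologyI:
  "(\<And>J. is_topology C J \<Longrightarrow> \<forall>Y. \<forall>R\<in>E Y. sieve_gen C R \<in> J Y \<Longrightarrow> S \<in> J X) \<Longrightarrow>
    S \<in> gen_topology C E X"
  unfolding gen_topology_def by blast

lemma gen_topologyD:
  "S \<in> gen_topology C E X \<Longrightarrow> is_topology C J \<Longrightarrow> \<forall>Y. \<forall>R\<in>E Y. sieve_gen C R \<in> J Y \<Longrightarrow> S \<in> J X"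
  unfolding gen_topology_def by blast

lemma (in category) gen_topology_is_topology:
  assumes E: "\<And>Y R. R \<in> E Y \<Longrightarrow> Y \<in> Obj C \<and> R \<subseteq> Arr C \<and> (\<forall>f\<in>R. Cod C f = Y)"
  shows "is_topology C (gen_topology C E)"
  unfolding is_topology_def
proof (intro conjI allI ballI impI)
  let ?all = "\<lambda>X. {S. X \<in> Obj C \<and> is_sieve C X S}"
  have "is_topology C ?all"
    unfolding is_topology_def
    by (simp add: max_sieve_is_sieve) (blast intro: pb_sieve_is_sieve)
  moreover have "\<forall>Y. \<forall>R\<in>E Y. sieve_gen C R \<in> ?all Y"
    using E sieve_gen_is_sieve by simp
  ultimately show "X \<in> Obj C" "is_sieve C X S" if "S \<in> gen_topology C E X" for X S
    using gen_topologyD[OF that, of ?all] by simp_all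
next
  show "max_sieve C X \<in> gen_topology C E X" if "X \<in> Obj C" for X
    using that by (intro gen_topologyI) (rule is_topologyD(3))
next
  show "pb_sieve C f S \<in> gen_topology C E (Dom C f)"
    if "S \<in> gen_topology C E X \<and> f \<in> Arr C \<and> Cod C f = X" for X S f
    using that by (intro gen_topologyI) (blast intro: is_topologyD(4) dest: gen_topologyD)
next
  show "R \<in> gen_topology C E X"
    if "S \<in> gen_topology C E X \<and> is_sieve C X R \<and>
      (\<forall>f\<in>S. pb_sieve C f R \<in> gen_topology C E (Dom C f))" for X S R
    using that by (intro gen_topologyI) (blast intro: is_topologyD(5) dest: gen_topologyD)
qed

locale site = category C for C :: "('o,'m) cat" +
  fixes J :: "'o \<Rightarrow> 'm set set"
  assumes is_topology: "is_topology C J"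
begin

lemma cover_obj: "S \<in> J X \<Longrightarrow> X \<in> Obj C"
  and cover_is_sieve: "S \<in> J X \<Longrightarrow> is_sieve C X S"
  and max_sieve_cover: "X \<in> Obj C \<Longrightarrow> max_sieve C X \<in> J X"
  and pb_sieve_cover: "S \<in> J X \<Longrightarrow> f \<in> Arr C \<Longrightarrow> Cod C f = X \<Longrightarrow> pb_sieve C f S \<in> J (Dom C f)"
  and cover_local: "S \<in> J X \<Longrightarrow> is_sieve C X R \<Longrightarrow> (\<And>f. f \<in> S \<Longrightarrow> pb_sieve C f R \<in> J (Dom C f)) \<Longrightarrow>
    R \<in> J X"
  using is_topologyD[OF is_topology] by blast+

lemma cover_superset:
  assumes "S \<in> J X" "is_sieve C X R" "S \<subseteq> R"
  shows "R \<in> J X"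
proof (rule cover_local[OF assms(1,2)])
  fix f assume "f \<in> S"
  with assms(3) have "f \<in> R" by blast
  moreover have "f \<in> Arr C"
    using is_sieveD(1)[OF assms(2) \<open>f \<in> R\<close>] .
  ultimately show "pb_sieve C f R \<in> J (Dom C f)"
    using pb_sieve_of_mem[OF assms(2)] max_sieve_cover by simp
qed

lemma cover_local_gen:
  assumes "sieve_gen C R \<in> J X" "R \<subseteq> Arr C" "is_sieve C X T"
    and local: "\<And>f. f \<in> R \<Longrightarrow> pb_sieve C f T \<in> J (Dom C f)"
  shows "T \<in> J X"
proof (rule cover_local[OF assms(1,3)])
  fix k assume "k \<in> sieve_gen C R"
  then obtain f g where "f \<in> R" "g \<in> Arr C" "Cod C g = Dom C f" "k = Comp C f g"
    by (rule sieve_genE)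
  moreover from this assms(2) have "f \<in> Arr C" by blast
  ultimately show "pb_sieve C k T \<in> J (Dom C k)"
    using pb_sieve_cover[OF local[of f], of g] by (simp add: pb_sieve_Comp)
qed

end

locale cd_site = category C for C :: "('o,'m) cat" +
  fixes P :: "'m square set"
  assumes cd_structure: "cd_structure C P"
begin

lemma distinguished_squareD:
  assumes "Q \<in> P"
  shows "sq_b Q \<in> Arr C" "sq_d Q \<in> Arr C" "Dom C (sq_b Q) = sq01 C Q" "Dom C (sq_d Q) = sq10 C Q"
    "Cod C (sq_b Q) = sq11 C Q" "Cod C (sq_d Q) = sq11 C Q"
proof -
  have "is_square C Q"
    using assms cd_structure unfolding cd_structure_def by blast
  then show "sq_b Q \<in> Arr C" "sq_d Q \<in> Arr C" "Dom C (sq_b Q) = sq01 C Q" "Dom C (sq_d Q) = sq10 C Q"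
    "Cod C (sq_b Q) = sq11 C Q" "Cod C (sq_d Q) = sq11 C Q"
    unfolding is_square_def sq01_def sq10_def sq11_def by simp_all
qed

lemma cd_topology_is_topology: "is_topology C (cd_topology C P)"
  unfolding cd_topology_def
proof (rule gen_topology_is_topology)
  fix Y R assume "R \<in> elem_covers C P Y"
  then obtain Q where "Q \<in> P" "R = {sq_b Q, sq_d Q}" "Y = sq11 C Q"
    unfolding elem_covers_def by blast
  then show "Y \<in> Obj C \<and> R \<subseteq> Arr C \<and> (\<forall>f\<in>R. Cod C f = Y)"
    using distinguished_squareD[of Q] Cod_in_Obj[of "sq_b Q"] by auto
qed

sublocale site C "cd_topology C P"
  by unfold_locales (rule cd_topology_is_topology)

lemma elementary_cover: "Q \<in> P \<Longrightarrow> sieve_gen C {sq_b Q, sq_d Q} \<in> cd_topology C P (sq11 C Q)"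
  unfolding cd_topology_def gen_topology_def elem_covers_def by blast

lemma simple_cover_covering: "simple_cover C P X R \<Longrightarrow> covering_family C (cd_topology C P) X R"
proof (induction rule: simple_cover.induct)
  case (iso f)
  then have "f \<in> Arr C"
    by (rule is_isoE)
  then show ?case
    unfolding covering_family_def
    using sieve_gen_iso[OF iso] max_sieve_cover[of "Cod C f"] by simp
next
  case (step Q R1 R2)
  let ?R = "Comp C (sq_b Q) ` R1 \<union> Comp C (sq_d Q) ` R2"
  note sq = distinguished_squareD[OF step.hyps(1)]
  have R: "?R \<subseteq> Arr C" "\<forall>f\<in>?R. Cod C f = sq11 C Q"
    using step.IH sq unfolding covering_family_def by auto
  have pb_cover: "pb_sieve C f (sieve_gen C ?R) \<in> cd_topology C P (Dom C f)"
    if f: "f \<in> Arr C" "Cod C f = sq11 C Q" and Rf: "covering_family C (cd_topology C P) (Dom C f) Rf"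
      and "Comp C f ` Rf \<subseteq> ?R" for f Rf
  proof (rule cover_superset)
    show "sieve_gen C Rf \<in> cd_topology C P (Dom C f)"
      using Rf unfolding covering_family_def by blast
    show "is_sieve C (Dom C f) (pb_sieve C f (sieve_gen C ?R))"
      using pb_sieve_is_sieve[OF sieve_gen_is_sieve[OF R] f] .
    show "sieve_gen C Rf \<subseteq> pb_sieve C f (sieve_gen C ?R)"
      using sieve_gen_subset_pb_sieve[OF f(1) _ _ that(4)] Rf unfolding covering_family_def by blast
  qed
  have "pb_sieve C f (sieve_gen C ?R) \<in> cd_topology C P (Dom C f)" if "f \<in> {sq_b Q, sq_d Q}" for f
    using that pb_cover[of "sq_b Q" R1] pb_cover[of "sq_d Q" R2] step.IH sq by auto
  then have "sieve_gen C ?R \<in> cd_topology C P (sq11 C Q)"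
    using cover_local_gen[OF elementary_cover[OF step.hyps(1)] _ sieve_gen_is_sieve[OF R]] sq by blast
  with R show ?case
    unfolding covering_family_def by blast
qed

lemma simple_cover_arrows:
  assumes "simple_cover C P X R"
  shows "R \<subseteq> Arr C" "\<forall>f\<in>R. Cod C f = X" "sieve_gen C R \<in> cd_topology C P X"
  using simple_cover_covering[OF assms] unfolding covering_family_def by blast+

end

section \<open>The sheaf condition for a single sieve\<close>

definition matching_family ::
    "('o,'m) cat \<Rightarrow> ('o \<Rightarrow> 'v set) \<Rightarrow> ('m \<Rightarrow> 'v \<Rightarrow> 'v) \<Rightarrow> 'm set \<Rightarrow> ('m \<Rightarrow> 'v) \<Rightarrow> bool" where
  "matching_family C F0 F1 S s \<longleftrightarrow> (\<forall>f\<in>S. s f \<in> F0 (Dom C f)) \<and>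
     (\<forall>f\<in>S. \<forall>g\<in>Arr C. Cod C g = Dom C f \<longrightarrow> s (Comp C f g) = F1 g (s f))"

definition amalgamation ::
    "('o \<Rightarrow> 'v set) \<Rightarrow> ('m \<Rightarrow> 'v \<Rightarrow> 'v) \<Rightarrow> 'o \<Rightarrow> 'm set \<Rightarrow> ('m \<Rightarrow> 'v) \<Rightarrow> 'v \<Rightarrow> bool" where
  "amalgamation F0 F1 X S s x \<longleftrightarrow> x \<in> F0 X \<and> (\<forall>f\<in>S. F1 f x = s f)"

definition separated_for :: "('o \<Rightarrow> 'v set) \<Rightarrow> ('m \<Rightarrow> 'v \<Rightarrow> 'v) \<Rightarrow> 'o \<Rightarrow> 'm set \<Rightarrow> bool" where
  "separated_for F0 F1 X S \<longleftrightarrow> (\<forall>x\<in>F0 X. \<forall>y\<in>F0 X. (\<forall>f\<in>S. F1 f x = F1 f y) \<longrightarrow> x = y)"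

definition sheaf_for :: "('o,'m) cat \<Rightarrow> ('o \<Rightarrow> 'v set) \<Rightarrow> ('m \<Rightarrow> 'v \<Rightarrow> 'v) \<Rightarrow> 'o \<Rightarrow> 'm set \<Rightarrow> bool" where
  "sheaf_for C F0 F1 X S \<longleftrightarrow> separated_for F0 F1 X S \<and>
     (\<forall>s. matching_family C F0 F1 S s \<longrightarrow> (\<exists>x. amalgamation F0 F1 X S s x))"

lemma is_sheafD:
  "is_sheaf C J F0 F1 \<Longrightarrow> S \<in> J X \<Longrightarrow> matching_family C F0 F1 S s \<Longrightarrow>
    \<exists>!x. amalgamation F0 F1 X S s x"
  unfolding is_sheaf_def matching_family_def amalgamation_def by blast

lemma matching_family_mono: "S' \<subseteq> S \<Longrightarrow> matching_family C F0 F1 S s \<Longrightarrow> matching_family C F0 F1 S' s"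
  unfolding matching_family_def by blast

lemma separated_for_mono: "S \<subseteq> S' \<Longrightarrow> separated_for F0 F1 X S \<Longrightarrow> separated_for F0 F1 X S'"
  unfolding separated_for_def by blast

lemma separated_forD:
  "separated_for F0 F1 X S \<Longrightarrow> x \<in> F0 X \<Longrightarrow> y \<in> F0 X \<Longrightarrow> (\<And>f. f \<in> S \<Longrightarrow> F1 f x = F1 f y) \<Longrightarrow> x = y"
  unfolding separated_for_def by blast

locale presheaf = category C for C :: "('o,'m) cat" +
  fixes F0 :: "'o \<Rightarrow> 'v set" and F1 :: "'m \<Rightarrow> 'v \<Rightarrow> 'v"
  assumes is_presheaf: "is_presheaf C F0 F1"
begin

lemma restriction_in [simp]: "f \<in> Arr C \<Longrightarrow> x \<in> F0 (Cod C f) \<Longrightarrow> F1 f x \<in> F0 (Dom C f)"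
  and restriction_Idm [simp]: "X \<in> Obj C \<Longrightarrow> x \<in> F0 X \<Longrightarrow> F1 (Idm C X) x = x"
  and restriction_Comp: "f \<in> Arr C \<Longrightarrow> g \<in> Arr C \<Longrightarrow> Cod C f = Dom C g \<Longrightarrow> x \<in> F0 (Cod C g) \<Longrightarrow>
    F1 (Comp C g f) x = F1 f (F1 g x)"
  using is_presheaf unfolding is_presheaf_def by blast+

lemma matching_family_restrictions:
  assumes "is_sieve C X S" "x \<in> F0 X"
  shows "matching_family C F0 F1 S (\<lambda>f. F1 f x)"
  unfolding matching_family_def
proof (intro conjI ballI impI)
  fix f assume "f \<in> S"
  with assms show "F1 f x \<in> F0 (Dom C f)"
    using is_sieveD[OF assms(1)] by simp
  fix g assume "g \<in> Arr C" "Cod C g = Dom C f"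
  with \<open>f \<in> S\<close> assms show "F1 (Comp C f g) x = F1 g (F1 f x)"
    using is_sieveD[OF assms(1)] restriction_Comp by simp
qed

lemma matching_family_pb:
  assumes "is_sieve C X S" "matching_family C F0 F1 S s" "f \<in> Arr C" "Cod C f = X"
  shows "matching_family C F0 F1 (pb_sieve C f S) (\<lambda>k. s (Comp C f k))"
  unfolding matching_family_def
proof (intro conjI ballI impI)
  fix k assume k: "k \<in> pb_sieve C f S"
  then have "k \<in> Arr C" "Cod C k = Dom C f" "Comp C f k \<in> S"
    unfolding pb_sieve_def by auto
  with assms show "s (Comp C f k) \<in> F0 (Dom C k)"
    unfolding matching_family_def by force
  fix g assume "g \<in> Arr C" "Cod C g = Dom C k"
  with \<open>k \<in> Arr C\<close> \<open>Cod C k = Dom C f\<close> \<open>Comp C f k \<in> S\<close> assms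
  show "s (Comp C f (Comp C k g)) = F1 g (s (Comp C f k))"
    unfolding matching_family_def by (simp add: Comp_assoc)
qed

lemma separated_for_of_sieve_gen:
  assumes "R \<subseteq> Arr C" "\<forall>f\<in>R. Cod C f = X" "separated_for F0 F1 X (sieve_gen C R)"
  shows "separated_for F0 F1 X R"
  unfolding separated_for_def
proof (intro ballI impI)
  fix x y assume xy: "x \<in> F0 X" "y \<in> F0 X" and eq: "\<forall>f\<in>R. F1 f x = F1 f y"
  show "x = y"
  proof (rule separated_forD[OF assms(3) xy])
    fix k assume "k \<in> sieve_gen C R"
    then obtain f g where "f \<in> R" "g \<in> Arr C" "Cod C g = Dom C f" "k = Comp C f g"
      by (rule sieve_genE)
    with assms(1,2) xy eq show "F1 k x = F1 k y"
      using restriction_Comp[of g f] by auto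
  qed
qed

lemma sheaf_for_max_sieve:
  assumes "X \<in> Obj C"
  shows "sheaf_for C F0 F1 X (max_sieve C X)"
  unfolding sheaf_for_def
proof (intro conjI allI impI)
  have "Idm C X \<in> max_sieve C X"
    using assms unfolding max_sieve_def by simp
  with assms show "separated_for F0 F1 X (max_sieve C X)"
    unfolding separated_for_def by (metis restriction_Idm)
  fix s assume s: "matching_family C F0 F1 (max_sieve C X) s"
  with \<open>Idm C X \<in> max_sieve C X\<close> assms have "s (Idm C X) \<in> F0 X"
    unfolding matching_family_def by force
  moreover have "F1 f (s (Idm C X)) = s f" if "f \<in> max_sieve C X" for f
  proof -
    from that have "f \<in> Arr C" "Cod C f = X"
      unfolding max_sieve_def by auto
    moreover from this assms have "Cod C f = Dom C (Idm C X)"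
      by simp
    ultimately have "s (Comp C (Idm C X) f) = F1 f (s (Idm C X))"
      using s \<open>Idm C X \<in> max_sieve C X\<close> unfolding matching_family_def by blast
    with \<open>f \<in> Arr C\<close> \<open>Cod C f = X\<close> show ?thesis
      by simp
  qed
  ultimately show "\<exists>x. amalgamation F0 F1 X (max_sieve C X) s x"
    unfolding amalgamation_def by blast
qed

lemma matching_family_of_compatible_sections:
  assumes \<phi>: "\<forall>i\<in>I. \<phi> i \<in> Arr C"
    and x: "\<forall>i\<in>I. x i \<in> F0 (Dom C (\<phi> i))"
    and compatible: "\<And>i j h h'. \<lbrakk>i \<in> I; j \<in> I; h \<in> Arr C; h' \<in> Arr C; Cod C h = Dom C (\<phi> i);
      Cod C h' = Dom C (\<phi> j); Comp C (\<phi> i) h = Comp C (\<phi> j) h'\<rbrakk> \<Longrightarrow> F1 h (x i) = F1 h' (x j)"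
  obtains t where "matching_family C F0 F1 (sieve_gen C (\<phi> ` I)) t"
    and "\<And>i h. i \<in> I \<Longrightarrow> h \<in> Arr C \<Longrightarrow> Cod C h = Dom C (\<phi> i) \<Longrightarrow> t (Comp C (\<phi> i) h) = F1 h (x i)"
proof
  \<comment> \<open>any factorisation of k through the family will do: compatibility makes the choice irrelevant\<close>
  define t where "t k = (case SOME (i, h). i \<in> I \<and> h \<in> Arr C \<and> Cod C h = Dom C (\<phi> i) \<and>
      k = Comp C (\<phi> i) h of (i, h) \<Rightarrow> F1 h (x i))" for k
  show t: "t (Comp C (\<phi> i) h) = F1 h (x i)"
    if "i \<in> I" "h \<in> Arr C" "Cod C h = Dom C (\<phi> i)" for i h
  proof -
    let ?P = "\<lambda>(j, h'). j \<in> I \<and> h' \<in> Arr C \<and> Cod C h' = Dom C (\<phi> j) \<and> Comp C (\<phi> i) h = Comp C (\<phi> j) h'"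
    have "?P (i, h)"
      using that by simp
    then have "?P (SOME p. ?P p)"
      by (rule someI)
    moreover obtain j h' where jh: "(SOME p. ?P p) = (j, h')"
      by (cases "SOME p. ?P p")
    ultimately have "F1 h (x i) = F1 h' (x j)"
      using compatible[OF that(1) _ that(2) _ that(3)] by simp
    with jh show ?thesis
      unfolding t_def by simp
  qed
  show "matching_family C F0 F1 (sieve_gen C (\<phi> ` I)) t"
    unfolding matching_family_def
  proof (intro conjI ballI impI)
    fix k assume "k \<in> sieve_gen C (\<phi> ` I)"
    then obtain f h where "f \<in> \<phi> ` I" "h \<in> Arr C" "Cod C h = Dom C f" "k = Comp C f h"
      by (rule sieve_genE)
    then obtain i where k: "i \<in> I" "h \<in> Arr C" "Cod C h = Dom C (\<phi> i)" "k = Comp C (\<phi> i) h"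
      by blast
    with \<phi> x show "t k \<in> F0 (Dom C k)"
      using t by simp
    fix g assume g: "g \<in> Arr C" "Cod C g = Dom C k"
    with k \<phi> have "Comp C k g = Comp C (\<phi> i) (Comp C h g)"
      by (simp add: Comp_assoc)
    with k \<phi> x g show "t (Comp C k g) = F1 g (t k)"
      using t restriction_Comp[of g h] by simp
  qed
qed

end

locale site_presheaf = site C J + presheaf C F0 F1
  for C :: "('o,'m) cat" and J and F0 :: "'o \<Rightarrow> 'v set" and F1
begin

lemma is_sheaf_iff: "is_sheaf C J F0 F1 \<longleftrightarrow> (\<forall>X. \<forall>S\<in>J X. sheaf_for C F0 F1 X S)"
proof
  assume sheaf: "is_sheaf C J F0 F1"
  show "\<forall>X. \<forall>S\<in>J X. sheaf_for C F0 F1 X S"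
  proof (intro allI ballI)
    fix X S assume S: "S \<in> J X"
    note unique = is_sheafD[OF sheaf S]
    have "separated_for F0 F1 X S"
      unfolding separated_for_def
    proof (intro ballI impI)
      fix x y assume "x \<in> F0 X" "y \<in> F0 X" "\<forall>f\<in>S. F1 f x = F1 f y"
      then show "x = y"
        using unique[OF matching_family_restrictions[OF cover_is_sieve[OF S] \<open>x \<in> F0 X\<close>]]
        unfolding amalgamation_def by auto
    qed
    with unique show "sheaf_for C F0 F1 X S"
      unfolding sheaf_for_def by blast
  qed
next
  assume sheaf_for: "\<forall>X. \<forall>S\<in>J X. sheaf_for C F0 F1 X S"
  show "is_sheaf C J F0 F1"
    unfolding is_sheaf_def
  proof (intro conjI allI impI is_presheaf)
    fix X S s
    assume "S \<in> J X \<and> (\<forall>f\<in>S. s f \<in> F0 (Dom C f)) \<and>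
      (\<forall>f\<in>S. \<forall>g\<in>Arr C. Cod C g = Dom C f \<longrightarrow> s (Comp C f g) = F1 g (s f))"
    then have "sheaf_for C F0 F1 X S" "matching_family C F0 F1 S s"
      using sheaf_for unfolding matching_family_def by auto
    then obtain x where x: "amalgamation F0 F1 X S s x"
      unfolding sheaf_for_def by blast
    show "\<exists>!x. x \<in> F0 X \<and> (\<forall>f\<in>S. F1 f x = s f)"
    proof (rule ex1I)
      show "x \<in> F0 X \<and> (\<forall>f\<in>S. F1 f x = s f)"
        using x unfolding amalgamation_def .
      fix y assume "y \<in> F0 X \<and> (\<forall>f\<in>S. F1 f y = s f)"
      with x \<open>sheaf_for C F0 F1 X S\<close> show "y = x"
        unfolding sheaf_for_def separated_for_def amalgamation_def by auto
    qed
  qed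
qed

context
  assumes separated: "\<And>Y T. T \<in> J Y \<Longrightarrow> separated_for F0 F1 Y T"
begin

lemma amalgamation_extend:
  assumes S: "is_sieve C X S" "matching_family C F0 F1 S s"
    and T: "T \<in> J X" "amalgamation F0 F1 X T s x"
  shows "amalgamation F0 F1 X S s x"
  unfolding amalgamation_def
proof (intro conjI ballI)
  show x: "x \<in> F0 X"
    using T(2) unfolding amalgamation_def by blast
  fix f assume "f \<in> S"
  with S have f: "f \<in> Arr C" "Cod C f = X" "s f \<in> F0 (Dom C f)"
    using is_sieveD[OF S(1)] unfolding matching_family_def by auto
  show "F1 f x = s f"
  proof (rule separated_forD[OF separated[OF pb_sieve_cover[OF T(1) f(1,2)]]])
    fix g assume "g \<in> pb_sieve C f T"
    then have g: "g \<in> Arr C" "Cod C g = Dom C f" "Comp C f g \<in> T"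
      unfolding pb_sieve_def by auto
    then have "F1 g (F1 f x) = s (Comp C f g)"
      using T(2) x f restriction_Comp[of g f x] unfolding amalgamation_def by simp
    also have "\<dots> = F1 g (s f)"
      using S(2) \<open>f \<in> S\<close> g unfolding matching_family_def by blast
    finally show "F1 g (F1 f x) = F1 g (s f)" .
  qed (use f x in simp_all)
qed

lemma sheaf_for_superset:
  assumes "is_sieve C X S" "T \<in> J X" "T \<subseteq> S" "sheaf_for C F0 F1 X T"
  shows "sheaf_for C F0 F1 X S"
  unfolding sheaf_for_def
proof (intro conjI allI impI)
  show "separated_for F0 F1 X S"
    using separated_for_mono[OF assms(3) separated[OF assms(2)]] .
  fix s assume s: "matching_family C F0 F1 S s"
  then obtain x where "amalgamation F0 F1 X T s x"
    using assms(3,4) matching_family_mono unfolding sheaf_for_def by blast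
  then show "\<exists>x. amalgamation F0 F1 X S s x"
    using amalgamation_extend[OF assms(1) s assms(2)] by blast
qed

lemma pb_amalgamations_compatible:
  assumes S: "S \<in> J X" "matching_family C F0 F1 S s"
    and f: "f \<in> Arr C" "Cod C f = X" "amalgamation F0 F1 (Dom C f) (pb_sieve C f S) (\<lambda>k. s (Comp C f k)) x"
    and f': "f' \<in> Arr C" "Cod C f' = X" "amalgamation F0 F1 (Dom C f') (pb_sieve C f' S) (\<lambda>k. s (Comp C f' k)) x'"
    and h: "h \<in> Arr C" "Cod C h = Dom C f" and h': "h' \<in> Arr C" "Cod C h' = Dom C f'"
    and eq: "Comp C f h = Comp C f' h'"
  shows "F1 h x = F1 h' x'"
proof -
  have restr: "F1 g (F1 h x) = s (Comp C (Comp C f h) g)"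
    if "f \<in> Arr C" "Cod C f = X" "amalgamation F0 F1 (Dom C f) (pb_sieve C f S) (\<lambda>k. s (Comp C f k)) x"
      "h \<in> Arr C" "Cod C h = Dom C f" "g \<in> pb_sieve C (Comp C f h) S" for f h x g
  proof -
    have g: "g \<in> Arr C" "Cod C g = Dom C h" "Comp C (Comp C f h) g \<in> S"
      using that(1,4,5,6) unfolding pb_sieve_def by auto
    then have "Comp C h g \<in> pb_sieve C f S"
      using that(1,4,5) unfolding pb_sieve_def by (simp add: Comp_assoc)
    with that g show ?thesis
      using restriction_Comp[of g h x] unfolding amalgamation_def by (simp add: Comp_assoc)
  qed
  have "Dom C h' = Dom C h"
    using eq f h f' h' by (metis Dom_Comp)
  then have xs: "F1 h x \<in> F0 (Dom C h)" "F1 h' x' \<in> F0 (Dom C h)"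
    using f(3) h f'(3) h' unfolding amalgamation_def by (simp, metis restriction_in)
  have "pb_sieve C (Comp C f h) S \<in> J (Dom C h)"
    using pb_sieve_cover[OF S(1), of "Comp C f h"] f h by simp
  then show ?thesis
  proof (rule separated_forD[OF separated xs])
    fix g assume "g \<in> pb_sieve C (Comp C f h) S"
    then show "F1 g (F1 h x) = F1 g (F1 h' x')"
      using restr[OF f h] restr[OF f' h'] eq by simp
  qed
qed

lemma pb_amalgamation_exists:
  assumes S: "is_sieve C X S" "matching_family C F0 F1 S s" and f: "f \<in> Arr C" "Cod C f = X"
    and T: "T \<in> J (Dom C f)" "T \<subseteq> pb_sieve C f S" "sheaf_for C F0 F1 (Dom C f) T"
  shows "\<exists>x. amalgamation F0 F1 (Dom C f) (pb_sieve C f S) (\<lambda>k. s (Comp C f k)) x"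
  using sheaf_for_superset[OF pb_sieve_is_sieve[OF S(1) f] T] matching_family_pb[OF S f]
  unfolding sheaf_for_def by blast

text \<open>The local amalgamations agree on overlaps by separatedness, so they glue over the sieve
  generated by R.\<close>
lemma amalgamation_from_pb_amalgamations:
  assumes S: "S \<in> J X" "matching_family C F0 F1 S s" "S \<subseteq> sieve_gen C R"
    and R: "R \<subseteq> Arr C" "\<forall>f\<in>R. Cod C f = X" "sheaf_for C F0 F1 X (sieve_gen C R)"
    and pb: "\<And>f. f \<in> R \<Longrightarrow> \<exists>x. amalgamation F0 F1 (Dom C f) (pb_sieve C f S) (\<lambda>k. s (Comp C f k)) x"
  shows "\<exists>y. amalgamation F0 F1 X S s y"
proof -
  obtain x where x: "\<And>f. f \<in> R \<Longrightarrow> amalgamation F0 F1 (Dom C f) (pb_sieve C f S) (\<lambda>k. s (Comp C f k)) (x f)"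
    using pb by metis
  have "\<exists>t. matching_family C F0 F1 (sieve_gen C R) t \<and>
    (\<forall>f\<in>R. \<forall>h\<in>Arr C. Cod C h = Dom C f \<longrightarrow> t (Comp C f h) = F1 h (x f))"
  proof (rule matching_family_of_compatible_sections[where \<phi> = "\<lambda>f. f" and I = R])
    show "\<forall>f\<in>R. x f \<in> F0 (Dom C f)"
      using x unfolding amalgamation_def by blast
    show "F1 h (x f) = F1 h' (x f')"
      if "f \<in> R" "f' \<in> R" "h \<in> Arr C" "h' \<in> Arr C" "Cod C h = Dom C f"
        "Cod C h' = Dom C f'" "Comp C f h = Comp C f' h'" for f f' h h'
      using pb_amalgamations_compatible[OF S(1,2) _ _ x[OF that(1)] _ _ x[OF that(2)] that(3,5,4,6,7)]
        that(1,2) R(1,2) by blast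
  qed (use R(1) in auto)
  then obtain t where t: "matching_family C F0 F1 (sieve_gen C R) t"
    "\<And>f h. f \<in> R \<Longrightarrow> h \<in> Arr C \<Longrightarrow> Cod C h = Dom C f \<Longrightarrow> t (Comp C f h) = F1 h (x f)"
    by blast
  obtain y where y: "amalgamation F0 F1 X (sieve_gen C R) t y"
    using R(3) t(1) unfolding sheaf_for_def by auto
  have "F1 k y = s k" if "k \<in> S" for k
  proof -
    from that S(3) obtain f h where fh: "f \<in> R" "h \<in> Arr C" "Cod C h = Dom C f" "k = Comp C f h"
      by (blast elim: sieve_genE)
    with that have "h \<in> pb_sieve C f S"
      unfolding pb_sieve_def by simp
    with fh that S(3) y show "F1 k y = s k"
      using t(2)[OF fh(1-3)] x[OF fh(1)] unfolding amalgamation_def by auto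
  qed
  with y show ?thesis
    unfolding amalgamation_def by blast
qed

end

end

section \<open>Sheaves for a complete cd-structure\<close>

locale cd_presheaf = cd_site C P + presheaf C F0 F1
  for C :: "('o,'m) cat" and P and F0 :: "'o \<Rightarrow> 'v set" and F1
begin

sublocale site_presheaf C "cd_topology C P" F0 F1 ..

lemma separated_for_simple_cover:
  assumes elementary: "\<And>Q. Q \<in> P \<Longrightarrow> separated_for F0 F1 (sq11 C Q) (sieve_gen C {sq_b Q, sq_d Q})"
  shows "simple_cover C P X R \<Longrightarrow> separated_for F0 F1 X R"
proof (induction rule: simple_cover.induct)
  case (iso f)
  then have "f \<in> Arr C"
    by (rule is_isoE)
  then have "separated_for F0 F1 (Cod C f) (sieve_gen C {f})"
    using sheaf_for_max_sieve[of "Cod C f"] sieve_gen_iso[OF iso] unfolding sheaf_for_def by simp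
  with \<open>f \<in> Arr C\<close> show ?case
    using separated_for_of_sieve_gen[of "{f}" "Cod C f"] by simp
next
  case (step Q R1 R2)
  note sq = distinguished_squareD[OF step.hyps(1)]
  have restrictions_eq: "F1 f x = F1 f y"
    if "f \<in> Arr C" "Cod C f = sq11 C Q" "simple_cover C P (Dom C f) Rf" "separated_for F0 F1 (Dom C f) Rf"
      "x \<in> F0 (sq11 C Q)" "y \<in> F0 (sq11 C Q)" "\<forall>r\<in>Rf. F1 (Comp C f r) x = F1 (Comp C f r) y" for f Rf x y
  proof (rule separated_forD[OF that(4)])
    fix r assume "r \<in> Rf"
    with that have r: "r \<in> Arr C" "Cod C r = Dom C f"
      using simple_cover_arrows[OF that(3)] by auto
    have "F1 r (F1 f x) = F1 (Comp C f r) x"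
      using restriction_Comp[OF r(1) that(1) r(2), of x] that by simp
    also have "\<dots> = F1 (Comp C f r) y"
      using that \<open>r \<in> Rf\<close> by blast
    also have "\<dots> = F1 r (F1 f y)"
      using restriction_Comp[OF r(1) that(1) r(2), of y] that by simp
    finally show "F1 r (F1 f x) = F1 r (F1 f y)" .
  qed (use that in simp_all)
  show ?case
    unfolding separated_for_def
  proof (intro ballI impI)
    fix x y assume xy: "x \<in> F0 (sq11 C Q)" "y \<in> F0 (sq11 C Q)"
      and eq: "\<forall>f\<in>Comp C (sq_b Q) ` R1 \<union> Comp C (sq_d Q) ` R2. F1 f x = F1 f y"
    have "F1 (sq_b Q) x = F1 (sq_b Q) y" "F1 (sq_d Q) x = F1 (sq_d Q) y"
      using restrictions_eq[of "sq_b Q" R1 x y] restrictions_eq[of "sq_d Q" R2 x y] step sq xy eq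
      by auto
    then show "x = y"
      using separated_for_of_sieve_gen[OF _ _ elementary[OF step.hyps(1)]] sq xy
      unfolding separated_for_def by auto
  qed
qed

context
  assumes complete: "cd_complete C P"
    and elementary: "\<And>Q. Q \<in> P \<Longrightarrow> sheaf_for C F0 F1 (sq11 C Q) (sieve_gen C {sq_b Q, sq_d Q})"
begin

lemma simple_cover_below:
  assumes "S \<in> cd_topology C P X"
  obtains R where "simple_cover C P X R" "sieve_gen C R \<subseteq> S"
  using complete assms unfolding cd_complete_def by blast

lemma separated_for_cover: "S \<in> cd_topology C P X \<Longrightarrow> separated_for F0 F1 X S"
proof (erule simple_cover_below)
  fix R assume R: "simple_cover C P X R" "sieve_gen C R \<subseteq> S"
  have "separated_for F0 F1 X R"
    using separated_for_simple_cover[OF _ R(1)] elementary unfolding sheaf_for_def by blast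
  moreover have "R \<subseteq> S"
    using subset_sieve_gen[OF simple_cover_arrows(1)[OF R(1)]] R(2) by blast
  ultimately show "separated_for F0 F1 X S"
    by (rule separated_for_mono[rotated])
qed

lemma sheaf_for_simple_cover: "simple_cover C P X R \<Longrightarrow> sheaf_for C F0 F1 X (sieve_gen C R)"
proof (induction rule: simple_cover.induct)
  case (iso f)
  then have "f \<in> Arr C"
    by (rule is_isoE)
  then show ?case
    using sheaf_for_max_sieve[of "Cod C f"] sieve_gen_iso[OF iso] by simp
next
  case (step Q R1 R2)
  define R where "R = Comp C (sq_b Q) ` R1 \<union> Comp C (sq_d Q) ` R2"
  note sq = distinguished_squareD[OF step.hyps(1)]
  note R = simple_cover_arrows[OF simple_cover.step[OF step.hyps, folded R_def]]
  note R1 = simple_cover_arrows[OF step.hyps(2)] and R2 = simple_cover_arrows[OF step.hyps(3)]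
  have S: "is_sieve C (sq11 C Q) (sieve_gen C R)"
    using sieve_gen_is_sieve[OF R(1,2)] .
  have "R \<subseteq> sieve_gen C {sq_b Q, sq_d Q}"
    using R1 R2 sq unfolding R_def by (auto intro: sieve_genI)
  then have "sieve_gen C R \<subseteq> sieve_gen C {sq_b Q, sq_d Q}"
    using sieve_gen_least[OF sieve_gen_is_sieve[of "{sq_b Q, sq_d Q}" "sq11 C Q"]] sq by simp
  have R1_pb: "sieve_gen C R1 \<subseteq> pb_sieve C (sq_b Q) (sieve_gen C R)"
    and R2_pb: "sieve_gen C R2 \<subseteq> pb_sieve C (sq_d Q) (sieve_gen C R)"
    using sieve_gen_subset_pb_sieve R1 R2 sq unfolding R_def by auto
  have "\<exists>x. amalgamation F0 F1 (sq11 C Q) (sieve_gen C R) s x"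
    if match: "matching_family C F0 F1 (sieve_gen C R) s" for s
  proof (rule amalgamation_from_pb_amalgamations[OF separated_for_cover R(3) match
        \<open>sieve_gen C R \<subseteq> sieve_gen C {sq_b Q, sq_d Q}\<close> _ _ elementary[OF step.hyps(1)]])
    fix f assume "f \<in> {sq_b Q, sq_d Q}"
    then show "\<exists>x. amalgamation F0 F1 (Dom C f) (pb_sieve C f (sieve_gen C R)) (\<lambda>k. s (Comp C f k)) x"
    proof
      assume "f = sq_b Q"
      then show ?thesis
        using pb_amalgamation_exists[OF separated_for_cover S match, of f "sieve_gen C R1"]
          sq R1 R1_pb step.IH(1) by simp
    next
      assume "f \<in> {sq_d Q}"
      then show ?thesis
        using pb_amalgamation_exists[OF separated_for_cover S match, of f "sieve_gen C R2"]
          sq R2 R2_pb step.IH(2) by simp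
    qed
  qed (use sq in auto)
  with R(3) show ?case
    unfolding sheaf_for_def R_def using separated_for_cover by blast
qed

theorem is_sheaf_if_elementary_sheaf: "is_sheaf C (cd_topology C P) F0 F1"
  unfolding is_sheaf_iff
proof (intro allI ballI)
  fix X S assume S: "S \<in> cd_topology C P X"
  then obtain R where R: "simple_cover C P X R" "sieve_gen C R \<subseteq> S"
    by (rule simple_cover_below)
  show "sheaf_for C F0 F1 X S"
    using sheaf_for_superset[OF separated_for_cover cover_is_sieve[OF S] simple_cover_arrows(3)[OF R(1)]
        R(2) sheaf_for_simple_cover[OF R(1)]] .
qed

end

end

section \<open>The sheaf of closed sieves\<close>

definition closed_sieve :: "('o,'m) cat \<Rightarrow> ('o \<Rightarrow> 'm set set) \<Rightarrow> 'o \<Rightarrow> 'm set \<Rightarrow> bool" where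
  "closed_sieve C J X T \<longleftrightarrow> is_sieve C X T \<and>
     (\<forall>h\<in>Arr C. Cod C h = X \<and> pb_sieve C h T \<in> J (Dom C h) \<longrightarrow> h \<in> T)"

definition sieve_closure :: "('o,'m) cat \<Rightarrow> ('o \<Rightarrow> 'm set set) \<Rightarrow> 'o \<Rightarrow> 'm set \<Rightarrow> 'm set" where
  "sieve_closure C J X S = {h \<in> Arr C. Cod C h = X \<and> pb_sieve C h S \<in> J (Dom C h)}"

context site
begin

lemma closed_sieveD:
  assumes "closed_sieve C J X T"
  shows "is_sieve C X T"
    and "h \<in> Arr C \<Longrightarrow> Cod C h = X \<Longrightarrow> pb_sieve C h T \<in> J (Dom C h) \<Longrightarrow> h \<in> T"
  using assms unfolding closed_sieve_def by blast+

lemma Idm_in_closed_cover: "closed_sieve C J X T \<Longrightarrow> T \<in> J X \<Longrightarrow> Idm C X \<in> T"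
  using closed_sieveD(2)[of X T "Idm C X"] closed_sieveD(1) cover_obj pb_sieve_Idm by simp

lemma closed_sieve_pb:
  assumes T: "closed_sieve C J X T" and f: "f \<in> Arr C" "Cod C f = X"
  shows "closed_sieve C J (Dom C f) (pb_sieve C f T)"
  unfolding closed_sieve_def
proof (intro conjI ballI impI)
  show "is_sieve C (Dom C f) (pb_sieve C f T)"
    using pb_sieve_is_sieve[OF closed_sieveD(1)[OF T] f] .
  fix h assume "h \<in> Arr C" "Cod C h = Dom C f \<and> pb_sieve C h (pb_sieve C f T) \<in> J (Dom C h)"
  with f have "Comp C f h \<in> T"
    using closed_sieveD(2)[OF T, of "Comp C f h"] by (simp add: pb_sieve_Comp)
  with \<open>h \<in> Arr C\<close> \<open>Cod C h = Dom C f \<and> _\<close> show "h \<in> pb_sieve C f T"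
    unfolding pb_sieve_def by simp
qed

lemma closed_sieve_max: "closed_sieve C J X (max_sieve C X)"
  unfolding closed_sieve_def max_sieve_def is_sieve_def by simp

lemma closed_sieve_closure:
  assumes S: "is_sieve C X S"
  shows "closed_sieve C J X (sieve_closure C J X S)"
  unfolding closed_sieve_def
proof (intro conjI ballI impI)
  show "is_sieve C X (sieve_closure C J X S)"
    unfolding is_sieve_def sieve_closure_def
    using pb_sieve_cover by (auto simp: pb_sieve_Comp)
  fix h assume h: "h \<in> Arr C" "Cod C h = X \<and> pb_sieve C h (sieve_closure C J X S) \<in> J (Dom C h)"
  have "pb_sieve C h S \<in> J (Dom C h)"
  proof (rule cover_local)
    show "pb_sieve C h (sieve_closure C J X S) \<in> J (Dom C h)"
      using h by blast
    show "is_sieve C (Dom C h) (pb_sieve C h S)"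
      using pb_sieve_is_sieve[OF S] h by blast
    fix k assume "k \<in> pb_sieve C h (sieve_closure C J X S)"
    with h have "k \<in> Arr C" "Cod C k = Dom C h" "pb_sieve C (Comp C h k) S \<in> J (Dom C k)"
      unfolding pb_sieve_def sieve_closure_def by auto
    with h show "pb_sieve C k (pb_sieve C h S) \<in> J (Dom C k)"
      using pb_sieve_Comp[of h k S] by simp
  qed
  with h show "h \<in> sieve_closure C J X S"
    unfolding sieve_closure_def by blast
qed

lemma subset_sieve_closure: "is_sieve C X S \<Longrightarrow> S \<subseteq> sieve_closure C J X S"
  unfolding sieve_closure_def
  using pb_sieve_of_mem max_sieve_cover is_sieveD by fastforce

lemma cover_if_Idm_in_closure:
  "is_sieve C X S \<Longrightarrow> X \<in> Obj C \<Longrightarrow> Idm C X \<in> sieve_closure C J X S \<Longrightarrow> S \<in> J X"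
  unfolding sieve_closure_def using pb_sieve_Idm by simp

lemma closed_sieves_presheaf: "is_presheaf C (\<lambda>X. {T. closed_sieve C J X T}) (pb_sieve C)"
  unfolding is_presheaf_def
proof (intro conjI ballI impI)
  fix f T assume "f \<in> Arr C" "T \<in> {T. closed_sieve C J (Cod C f) T}"
  then show "pb_sieve C f T \<in> {T. closed_sieve C J (Dom C f) T}"
    using closed_sieve_pb by simp
next
  fix X T assume "X \<in> Obj C" "T \<in> {T. closed_sieve C J X T}"
  then show "pb_sieve C (Idm C X) T = T"
    using pb_sieve_Idm closed_sieveD(1) by simp
next
  fix f g T assume "f \<in> Arr C" "g \<in> Arr C" "Cod C f = Dom C g"
  then show "pb_sieve C (Comp C g f) T = pb_sieve C f (pb_sieve C g T)"
    using pb_sieve_Comp by blast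
qed

lemma closed_sieve_subset:
  assumes S: "S \<in> J X" and T1: "closed_sieve C J X T1" and T2: "closed_sieve C J X T2"
    and eq: "\<And>f. f \<in> S \<Longrightarrow> pb_sieve C f T1 = pb_sieve C f T2"
  shows "T1 \<subseteq> T2"
proof
  fix h assume "h \<in> T1"
  then have h: "h \<in> Arr C" "Cod C h = X"
    using is_sieveD[OF closed_sieveD(1)[OF T1]] by auto
  have "pb_sieve C h S \<subseteq> pb_sieve C h T2"
  proof
    fix k assume "k \<in> pb_sieve C h S"
    then have k: "k \<in> Arr C" "Cod C k = Dom C h" "Comp C h k \<in> S"
      unfolding pb_sieve_def by auto
    then have "Comp C h k \<in> T1"
      using is_sieve_Comp[OF closed_sieveD(1)[OF T1] \<open>h \<in> T1\<close>] by blast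
    with k h have "Idm C (Dom C k) \<in> pb_sieve C (Comp C h k) T1"
      unfolding pb_sieve_def by simp
    with eq k(3) have "Idm C (Dom C k) \<in> pb_sieve C (Comp C h k) T2"
      by simp
    with k h show "k \<in> pb_sieve C h T2"
      unfolding pb_sieve_def by simp
  qed
  then have "pb_sieve C h T2 \<in> J (Dom C h)"
    using cover_superset[OF pb_sieve_cover[OF S h] pb_sieve_is_sieve[OF closed_sieveD(1)[OF T2] h]]
    by blast
  with h show "h \<in> T2"
    using closed_sieveD(2)[OF T2] by blast
qed

context
  fixes X S Tf
  assumes S: "S \<in> J X"
    and Tf: "matching_family C (\<lambda>X. {T. closed_sieve C J X T}) (pb_sieve C) S Tf"
begin

text \<open>\<open>Idm C (Dom C k) \<in> Tf (Comp C h k)\<close> says that \<open>Comp C h k\<close> lies in the glued sieve, as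
  seen from the local piece over \<open>Comp C h k\<close>.\<close>
definition glued_sieve :: "'m set" where
  "glued_sieve = {h \<in> Arr C. Cod C h = X \<and>
     (\<forall>k\<in>Arr C. Cod C k = Dom C h \<and> Comp C h k \<in> S \<longrightarrow> Idm C (Dom C k) \<in> Tf (Comp C h k))}"

lemma glued_sieveD:
  "h \<in> glued_sieve \<Longrightarrow> k \<in> Arr C \<Longrightarrow> Cod C k = Dom C h \<Longrightarrow> Comp C h k \<in> S \<Longrightarrow>
    Idm C (Dom C k) \<in> Tf (Comp C h k)"
  unfolding glued_sieve_def by blast

lemma Tf_closed: "f \<in> S \<Longrightarrow> closed_sieve C J (Dom C f) (Tf f)"
  and Tf_Comp: "f \<in> S \<Longrightarrow> g \<in> Arr C \<Longrightarrow> Cod C g = Dom C f \<Longrightarrow> Tf (Comp C f g) = pb_sieve C g (Tf f)"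
  using Tf unfolding matching_family_def by blast+

lemma pb_sieve_glued_sieve:
  assumes "f \<in> S"
  shows "pb_sieve C f glued_sieve = Tf f"
proof
  have f: "f \<in> Arr C" "Cod C f = X"
    using is_sieveD[OF cover_is_sieve[OF S] assms] by auto
  note Tf_sieve = closed_sieveD(1)[OF Tf_closed[OF assms]]
  show "pb_sieve C f glued_sieve \<subseteq> Tf f"
  proof
    fix g assume "g \<in> pb_sieve C f glued_sieve"
    then have g: "g \<in> Arr C" "Cod C g = Dom C f" "Comp C f g \<in> glued_sieve"
      unfolding pb_sieve_def by auto
    moreover have "Comp C f g \<in> S"
      using is_sieve_Comp[OF cover_is_sieve[OF S] assms g(1,2)] .
    ultimately have "Idm C (Dom C g) \<in> Tf (Comp C f g)"
      using glued_sieveD[OF g(3), of "Idm C (Dom C g)"] f by simp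
    then have "Idm C (Dom C g) \<in> pb_sieve C g (Tf f)"
      using Tf_Comp[OF assms g(1,2)] by simp
    with g show "g \<in> Tf f"
      unfolding pb_sieve_def by simp
  qed
  show "Tf f \<subseteq> pb_sieve C f glued_sieve"
  proof
    fix g assume "g \<in> Tf f"
    then have g: "g \<in> Arr C" "Cod C g = Dom C f"
      using is_sieveD[OF Tf_sieve] by auto
    have "Idm C (Dom C k) \<in> Tf (Comp C (Comp C f g) k)"
      if "k \<in> Arr C" "Cod C k = Dom C (Comp C f g)" for k
    proof -
      from that f g have k: "Cod C k = Dom C g" "Comp C (Comp C f g) k = Comp C f (Comp C g k)"
        by (simp_all add: Comp_assoc)
      have "Comp C g k \<in> Tf f"
        using is_sieve_Comp[OF Tf_sieve \<open>g \<in> Tf f\<close> that(1) k(1)] .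
      with g that k show ?thesis
        using Tf_Comp[OF assms, of "Comp C g k"] unfolding pb_sieve_def by simp
    qed
    with f g have "Comp C f g \<in> glued_sieve"
      unfolding glued_sieve_def by simp
    with g show "g \<in> pb_sieve C f glued_sieve"
      unfolding pb_sieve_def by simp
  qed
qed

lemma closed_sieve_glued_sieve: "closed_sieve C J X glued_sieve"
  unfolding closed_sieve_def
proof (intro conjI ballI impI)
  show "is_sieve C X glued_sieve"
    unfolding is_sieve_def
  proof (intro conjI ballI impI)
    fix h g assume h: "h \<in> glued_sieve" and g: "g \<in> Arr C" "Cod C g = Dom C h"
    from h have "h \<in> Arr C" "Cod C h = X"
      unfolding glued_sieve_def by auto
    moreover have "Idm C (Dom C k) \<in> Tf (Comp C (Comp C h g) k)"
      if "k \<in> Arr C" "Cod C k = Dom C (Comp C h g)" "Comp C (Comp C h g) k \<in> S" for k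
      using glued_sieveD[OF h, of "Comp C g k"] that g \<open>h \<in> Arr C\<close> by (simp add: Comp_assoc)
    ultimately show "Comp C h g \<in> glued_sieve"
      using g unfolding glued_sieve_def by simp
  qed (auto simp: glued_sieve_def)
  fix h assume h: "h \<in> Arr C" "Cod C h = X \<and> pb_sieve C h glued_sieve \<in> J (Dom C h)"
  have "Idm C (Dom C k) \<in> Tf (Comp C h k)"
    if "k \<in> Arr C" "Cod C k = Dom C h" "Comp C h k \<in> S" for k
  proof (rule Idm_in_closed_cover)
    show "closed_sieve C J (Dom C k) (Tf (Comp C h k))"
      using Tf_closed[OF that(3)] h that by simp
    have "pb_sieve C k (pb_sieve C h glued_sieve) \<in> J (Dom C k)"
      using pb_sieve_cover h that by blast
    then show "Tf (Comp C h k) \<in> J (Dom C k)"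
      using pb_sieve_glued_sieve[OF that(3)] pb_sieve_Comp[of h k glued_sieve] h that by simp
  qed
  with h show "h \<in> glued_sieve"
    unfolding glued_sieve_def by simp
qed

end

theorem closed_sieves_sheaf: "is_sheaf C J (\<lambda>X. {T. closed_sieve C J X T}) (pb_sieve C)"
proof -
  interpret site_presheaf C J "\<lambda>X. {T. closed_sieve C J X T}" "pb_sieve C"
    by unfold_locales (rule closed_sieves_presheaf)
  show ?thesis
    unfolding is_sheaf_iff sheaf_for_def
  proof (intro allI ballI conjI impI)
    fix X S assume S: "S \<in> J X"
    show "separated_for (\<lambda>X. {T. closed_sieve C J X T}) (pb_sieve C) X S"
      unfolding separated_for_def
      using closed_sieve_subset[OF S] by blast
    fix Tf assume "matching_family C (\<lambda>X. {T. closed_sieve C J X T}) (pb_sieve C) S Tf"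
    then show "\<exists>T. amalgamation (\<lambda>X. {T. closed_sieve C J X T}) (pb_sieve C) X S Tf T"
      using closed_sieve_glued_sieve[OF S] pb_sieve_glued_sieve[OF S] unfolding amalgamation_def by blast
  qed
qed

end

lemma is_sheaf_inj_image:
  assumes sheaf: "is_sheaf C J F0 F1" and e: "inj e"
  shows "is_sheaf C J (\<lambda>X. e ` F0 X) (\<lambda>h y. e (F1 h (inv e y)))"
  unfolding is_sheaf_def
proof (intro conjI allI impI)
  have "is_presheaf C F0 F1"
    using sheaf unfolding is_sheaf_def by blast
  with e show "is_presheaf C (\<lambda>X. e ` F0 X) (\<lambda>h y. e (F1 h (inv e y)))"
    unfolding is_presheaf_def by auto
  fix X S s
  assume a: "S \<in> J X \<and> (\<forall>f\<in>S. s f \<in> e ` F0 (Dom C f)) \<and>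
    (\<forall>f\<in>S. \<forall>g\<in>Arr C. Cod C g = Dom C f \<longrightarrow> s (Comp C f g) = e (F1 g (inv e (s f))))"
  with e have "matching_family C F0 F1 S (\<lambda>f. inv e (s f))"
    unfolding matching_family_def by auto
  then have "\<exists>!x. x \<in> F0 X \<and> (\<forall>f\<in>S. F1 f x = inv e (s f))"
    using is_sheafD[OF sheaf] a unfolding amalgamation_def by blast
  then obtain x where x: "x \<in> F0 X \<and> (\<forall>f\<in>S. F1 f x = inv e (s f))"
    and unique: "\<forall>y. y \<in> F0 X \<and> (\<forall>f\<in>S. F1 f y = inv e (s f)) \<longrightarrow> y = x"
    by (rule ex1E)
  show "\<exists>!y. y \<in> e ` F0 X \<and> (\<forall>f\<in>S. e (F1 f (inv e y)) = s f)"
  proof (rule ex1I)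
    show "e x \<in> e ` F0 X \<and> (\<forall>f\<in>S. e (F1 f (inv e (e x))) = s f)"
      using x a e by (auto simp: f_inv_into_f)
    fix y assume y: "y \<in> e ` F0 X \<and> (\<forall>f\<in>S. e (F1 f (inv e y)) = s f)"
    then obtain a where a: "y = e a" "a \<in> F0 X"
      by blast
    with y e have "\<forall>f\<in>S. F1 f a = inv e (s f)"
      by (metis inv_f_f)
    with unique a show "y = e x"
      by blast
  qed
qed

section \<open>Functors between sites\<close>

lemma (in category) is_pullbackD:
  assumes "is_pullback C p1 p2 f g"
  shows "p1 \<in> Arr C" "p2 \<in> Arr C" "Cod C p1 = Dom C f" "Cod C p2 = Dom C g" "Dom C p1 = Dom C p2"
    "Comp C f p1 = Comp C g p2"
  using assms unfolding is_pullback_def by auto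

lemma (in category) is_pullback_factor:
  assumes "is_pullback C p1 p2 f g" "h \<in> Arr C" "h' \<in> Arr C" "Cod C h = Dom C f" "Cod C h' = Dom C g"
    "Comp C f h = Comp C g h'"
  obtains m where "m \<in> Arr C" "Cod C m = Dom C p1" "Comp C p1 m = h" "Comp C p2 m = h'"
proof -
  have "f \<in> Arr C" "g \<in> Arr C"
    using assms(1) unfolding is_pullback_def by auto
  with assms(2-6) have "Dom C h = Dom C h'"
    by (metis Dom_Comp)
  with assms show ?thesis
    using that unfolding is_pullback_def by blast
qed

lemma (in presheaf) restrictions_eq_via_pullback:
  assumes p: "is_pullback C p1 p2 f g" and xy: "x \<in> F0 (Dom C f)" "y \<in> F0 (Dom C g)"
    and eq: "F1 p1 x = F1 p2 y"
    and h: "h \<in> Arr C" "h' \<in> Arr C" "Cod C h = Dom C f" "Cod C h' = Dom C g" "Comp C f h = Comp C g h'"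
  shows "F1 h x = F1 h' y"
proof -
  note p12 = is_pullbackD[OF p]
  obtain m where m: "m \<in> Arr C" "Cod C m = Dom C p1" "Comp C p1 m = h" "Comp C p2 m = h'"
    using is_pullback_factor[OF p h] .
  have "F1 h x = F1 m (F1 p1 x)"
    using restriction_Comp[of m p1 x] m p12 xy by simp
  also have "\<dots> = F1 m (F1 p2 y)"
    using eq by simp
  also have "\<dots> = F1 h' y"
    using restriction_Comp[of m p2 y] m p12 xy by simp
  finally show ?thesis .
qed

locale cat_functor = C: category C + D: category D
  for C :: "('o,'m) cat" and D :: "('p,'n) cat" +
  fixes uo :: "'o \<Rightarrow> 'p" and um :: "'m \<Rightarrow> 'n"
  assumes is_functor: "is_functor C D uo um"
begin

lemma uo_in_Obj [simp]: "X \<in> Obj C \<Longrightarrow> uo X \<in> Obj D"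
  and um_Idm [simp]: "X \<in> Obj C \<Longrightarrow> um (Idm C X) = Idm D (uo X)"
  and um_in_Arr [simp]: "f \<in> Arr C \<Longrightarrow> um f \<in> Arr D"
  and Dom_um [simp]: "f \<in> Arr C \<Longrightarrow> Dom D (um f) = uo (Dom C f)"
  and Cod_um [simp]: "f \<in> Arr C \<Longrightarrow> Cod D (um f) = uo (Cod C f)"
  and um_Comp: "f \<in> Arr C \<Longrightarrow> g \<in> Arr C \<Longrightarrow> Cod C f = Dom C g \<Longrightarrow> um (Comp C g f) = Comp D (um g) (um f)"
  using is_functor unfolding is_functor_def by blast+

lemma presheaf_comp:
  assumes "is_presheaf D G0 G1"
  shows "is_presheaf C (G0 \<circ> uo) (G1 \<circ> um)"
proof -
  interpret G: presheaf D G0 G1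
    by unfold_locales (rule assms)
  show ?thesis
    unfolding is_presheaf_def
  proof (intro conjI ballI impI)
    fix f x assume "f \<in> Arr C" "x \<in> (G0 \<circ> uo) (Cod C f)"
    then show "(G1 \<circ> um) f x \<in> (G0 \<circ> uo) (Dom C f)"
      using G.restriction_in[of "um f" x] by simp
  next
    fix X x assume "X \<in> Obj C" "x \<in> (G0 \<circ> uo) X"
    then show "(G1 \<circ> um) (Idm C X) x = x"
      by simp
  next
    fix f g x assume "f \<in> Arr C" "g \<in> Arr C" "Cod C f = Dom C g" "x \<in> (G0 \<circ> uo) (Cod C g)"
    then show "(G1 \<circ> um) (Comp C g f) x = (G1 \<circ> um) f ((G1 \<circ> um) g x)"
      using G.restriction_Comp[of "um f" "um g" x] by (simp add: um_Comp)
  qed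
qed

lemma um_in_sieve_gen:
  assumes "k \<in> sieve_gen C R" "R \<subseteq> Arr C"
  shows "um k \<in> sieve_gen D (um ` R)"
proof -
  obtain f g where "f \<in> R" "g \<in> Arr C" "Cod C g = Dom C f" "k = Comp C f g"
    using assms(1) by (rule C.sieve_genE)
  with assms(2) show ?thesis
    using D.sieve_genI[of "um f" "um ` R" "um g"] um_Comp[of g f] by auto
qed

context
  fixes JD G0 G1 X R
  assumes JD: "is_topology D JD" and G: "is_sheaf D JD G0 G1"
    and R: "R \<subseteq> Arr C" "\<forall>f\<in>R. Cod C f = X" and cover: "sieve_gen D (um ` R) \<in> JD (uo X)"
begin

interpretation G: site_presheaf D JD G0 G1
  using JD G unfolding is_sheaf_def by unfold_locales blast+

lemma sheaf_for_image: "sheaf_for D G0 G1 (uo X) (sieve_gen D (um ` R))"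
  using G cover G.is_sheaf_iff by blast

lemma separated_for_comp: "separated_for (G0 \<circ> uo) (G1 \<circ> um) X (sieve_gen C R)"
proof -
  have "um ` R \<subseteq> Arr D" "\<forall>f\<in>um ` R. Cod D f = uo X"
    using R by auto
  then have "separated_for G0 G1 (uo X) (um ` R)"
    using G.separated_for_of_sieve_gen sheaf_for_image unfolding sheaf_for_def by blast
  then show ?thesis
    using separated_for_mono[OF C.subset_sieve_gen[OF R(1)]] unfolding separated_for_def by simp
qed

text \<open>The sections s f (f in R) are compatible in D because any two arrows into f and g with a
  common composite factor through the image of the pullback of f and g.\<close>
lemma amalgamation_comp:
  assumes s: "matching_family C (G0 \<circ> uo) (G1 \<circ> um) (sieve_gen C R) s"
    and pb: "\<And>f g. f \<in> R \<Longrightarrow> g \<in> R \<Longrightarrow>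
      \<exists>p1 p2. is_pullback C p1 p2 f g \<and> is_pullback D (um p1) (um p2) (um f) (um g)"
  shows "\<exists>y. amalgamation (G0 \<circ> uo) (G1 \<circ> um) X (sieve_gen C R) s y"
proof -
  have s_Comp: "s (Comp C f g) = G1 (um g) (s f)" if "f \<in> R" "g \<in> Arr C" "Cod C g = Dom C f" for f g
    using s C.subset_sieve_gen[OF R(1)] that unfolding matching_family_def by auto
  have s_in: "\<forall>f\<in>R. s f \<in> G0 (Dom D (um f))"
    using s R C.subset_sieve_gen[OF R(1)] unfolding matching_family_def by (auto simp: subset_iff)
  obtain t where t: "matching_family D G0 G1 (sieve_gen D (um ` R)) t"
    "\<And>f h. f \<in> R \<Longrightarrow> h \<in> Arr D \<Longrightarrow> Cod D h = Dom D (um f) \<Longrightarrow> t (Comp D (um f) h) = G1 h (s f)"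
  proof (rule G.matching_family_of_compatible_sections[OF _ s_in])
    fix f g h h' assume fg: "f \<in> R" "g \<in> R" and h: "h \<in> Arr D" "h' \<in> Arr D"
      "Cod D h = Dom D (um f)" "Cod D h' = Dom D (um g)" "Comp D (um f) h = Comp D (um g) h'"
    obtain p1 p2 where p: "is_pullback C p1 p2 f g" "is_pullback D (um p1) (um p2) (um f) (um g)"
      using pb[OF fg] by blast
    note p12 = C.is_pullbackD[OF p(1)]
    have "G1 (um p1) (s f) = G1 (um p2) (s g)"
      using s_Comp[OF fg(1) p12(1,3)] s_Comp[OF fg(2) p12(2,4)] p12(6) by simp
    then show "G1 h (s f) = G1 h' (s g)"
      using G.restrictions_eq_via_pullback[OF p(2) _ _ _ h] fg s_in by blast
  qed (use R in auto)
  obtain y where y: "amalgamation G0 G1 (uo X) (sieve_gen D (um ` R)) t y"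
    using sheaf_for_image t(1) unfolding sheaf_for_def by blast
  have "G1 (um k) y = s k" if k: "k \<in> sieve_gen C R" for k
  proof -
    obtain f g where fg: "f \<in> R" "g \<in> Arr C" "Cod C g = Dom C f" "k = Comp C f g"
      using k by (rule C.sieve_genE)
    with y R show ?thesis
      using um_in_sieve_gen[OF k R(1)] t(2)[of f "um g"] s_Comp um_Comp[of g f]
      unfolding amalgamation_def by auto
  qed
  with y show ?thesis
    unfolding amalgamation_def by auto
qed

lemma sheaf_for_comp:
  assumes "\<And>f g. f \<in> R \<Longrightarrow> g \<in> R \<Longrightarrow>
    \<exists>p1 p2. is_pullback C p1 p2 f g \<and> is_pullback D (um p1) (um p2) (um f) (um g)"
  shows "sheaf_for C (G0 \<circ> uo) (G1 \<circ> um) X (sieve_gen C R)"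
  unfolding sheaf_for_def using separated_for_comp amalgamation_comp[OF _ assms] by blast

end

end

context cat_functor
begin

lemma um_Comp_image_subset:
  assumes "f \<in> Arr C" "R' \<subseteq> Arr C" "\<forall>r\<in>R'. Cod C r = Dom C f" "um ` R' \<subseteq> sieve_gen D R"
    "R \<subseteq> Arr D" "\<forall>r\<in>R. Cod D r = Dom D (um f)"
  shows "um ` Comp C f ` R' \<subseteq> sieve_gen D (Comp D (um f) ` R)"
proof clarify
  fix r assume "r \<in> R'"
  with assms(2-4) have r: "r \<in> Arr C" "Cod C r = Dom C f" "um r \<in> sieve_gen D R"
    by auto
  then show "um (Comp C f r) \<in> sieve_gen D (Comp D (um f) ` R)"
    using D.Comp_in_sieve_gen_image[OF r(3) um_in_Arr[OF assms(1)] assms(5,6)] um_Comp[of r f] assms(1)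
    by simp
qed

text \<open>Continuity is tested on the sheaf of closed sieves of D, transported into \<open>'v\<close> along e: the
  closure of the image sieve and the maximal sieve restrict to the same sections along a cover of X,
  so they coincide.\<close>
lemma covering_family_image_if_continuous:
  assumes JC: "is_topology C JC" and JD: "is_topology D JD" and e: "inj (e :: 'n set \<Rightarrow> 'v)"
    and cont: "continuous_site TYPE('v) C JC D JD uo um"
    and R: "covering_family C JC X R"
  shows "covering_family D JD (uo X) (um ` R)"
proof -
  interpret D': site D JD
    by unfold_locales (rule JD)
  define \<Omega>0 where "\<Omega>0 Y = e ` {T. closed_sieve D JD Y T}" for Y
  define \<Omega>1 where "\<Omega>1 h y = e (pb_sieve D h (inv e y))" for h y
  have "is_sheaf D JD \<Omega>0 \<Omega>1"
    unfolding \<Omega>0_def \<Omega>1_def using is_sheaf_inj_image[OF D'.closed_sieves_sheaf e] .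
  then have sheaf: "is_sheaf C JC (\<Omega>0 \<circ> uo) (\<Omega>1 \<circ> um)"
    using cont unfolding continuous_site_def by blast
  interpret F: site_presheaf C JC "\<Omega>0 \<circ> uo" "\<Omega>1 \<circ> um"
    using JC sheaf unfolding is_sheaf_def by unfold_locales blast+
  have R_arr: "R \<subseteq> Arr C" "\<forall>f\<in>R. Cod C f = X" and S: "sieve_gen C R \<in> JC X"
    using R unfolding covering_family_def by blast+
  have X: "X \<in> Obj C"
    using F.cover_obj[OF S] .
  have uR: "um ` R \<subseteq> Arr D" "\<forall>f\<in>um ` R. Cod D f = uo X"
    using R_arr by auto
  define S' where "S' = sieve_gen D (um ` R)"
  define cl where "cl = sieve_closure D JD (uo X) S'"
  have S': "is_sieve D (uo X) S'"
    unfolding S'_def using D.sieve_gen_is_sieve[OF uR] .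
  have cl: "closed_sieve D JD (uo X) cl"
    unfolding cl_def using D'.closed_sieve_closure[OF S'] .
  have "e cl = e (max_sieve D (uo X))"
  proof (rule separated_forD)
    show "separated_for (\<Omega>0 \<circ> uo) (\<Omega>1 \<circ> um) X (sieve_gen C R)"
      using sheaf S F.is_sheaf_iff unfolding sheaf_for_def by blast
    show "e cl \<in> (\<Omega>0 \<circ> uo) X" "e (max_sieve D (uo X)) \<in> (\<Omega>0 \<circ> uo) X"
      unfolding \<Omega>0_def using cl D'.closed_sieve_max by auto
    fix f assume "f \<in> sieve_gen C R"
    then have f: "f \<in> Arr C" "Cod C f = X" "um f \<in> cl"
      using C.is_sieveD[OF F.cover_is_sieve[OF S]] um_in_sieve_gen[OF _ R_arr(1)]
        D'.subset_sieve_closure[OF S'] unfolding S'_def cl_def by auto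
    then have "pb_sieve D (um f) cl = pb_sieve D (um f) (max_sieve D (uo X))"
      using D.pb_sieve_of_mem[OF D'.closed_sieveD(1)[OF cl]]
        D.pb_sieve_of_mem[OF D.max_sieve_is_sieve, of "um f" "uo X"]
      unfolding max_sieve_def by simp
    with e show "(\<Omega>1 \<circ> um) f (e cl) = (\<Omega>1 \<circ> um) f (e (max_sieve D (uo X)))"
      unfolding \<Omega>1_def by simp
  qed
  with e have "Idm D (uo X) \<in> cl"
    using X unfolding max_sieve_def by (simp add: inj_eq)
  then have "S' \<in> JD (uo X)"
    using D'.cover_if_Idm_in_closure[OF S'] X unfolding cl_def by simp
  with uR show ?thesis
    unfolding covering_family_def S'_def by blast
qed

end

lemma preserves_cover_pullbacksD:
  assumes "preserves_cover_pullbacks C J D um" "covering_family C J X R"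
  shows "f \<in> R \<Longrightarrow> g \<in> Arr C \<Longrightarrow> Cod C g = X \<Longrightarrow>
    \<exists>p1 p2. is_pullback C p1 p2 f g \<and> is_pullback D (um p1) (um p2) (um f) (um g)"
  using assms unfolding preserves_cover_pullbacks_def by blast

locale cd_functor = cat_functor C D uo um + C: cd_site C PC + D: cd_site D PD
  for C :: "('o,'m) cat" and D :: "('p,'n) cat" and uo um PC PD
begin

lemma continuous_if_squares_cover:
  assumes complete: "cd_complete C PC"
    and pullbacks: "preserves_cover_pullbacks C (cd_topology C PC) D um"
    and squares: "\<forall>Q\<in>PC. covering_family D (cd_topology D PD) (uo (sq11 C Q)) {um (sq_b Q), um (sq_d Q)}"
  shows "continuous_site TYPE('v) C (cd_topology C PC) D (cd_topology D PD) uo um"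
  unfolding continuous_site_def
proof (intro allI impI)
  fix G0 :: "'p \<Rightarrow> 'v set" and G1 assume G: "is_sheaf D (cd_topology D PD) G0 G1"
  have "is_presheaf D G0 G1"
    using G unfolding is_sheaf_def by blast
  then interpret F: cd_presheaf C PC "G0 \<circ> uo" "G1 \<circ> um"
    by unfold_locales (rule presheaf_comp)
  show "is_sheaf C (cd_topology C PC) (G0 \<circ> uo) (G1 \<circ> um)"
  proof (rule F.is_sheaf_if_elementary_sheaf[OF complete])
    fix Q assume Q: "Q \<in> PC"
    note sq = C.distinguished_squareD[OF Q]
    have elementary: "covering_family C (cd_topology C PC) (sq11 C Q) {sq_b Q, sq_d Q}"
      unfolding covering_family_def using C.elementary_cover[OF Q] sq by simp
    show "sheaf_for C (G0 \<circ> uo) (G1 \<circ> um) (sq11 C Q) (sieve_gen C {sq_b Q, sq_d Q})"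
    proof (rule sheaf_for_comp[OF D.cd_topology_is_topology G])
      show "sieve_gen D (um ` {sq_b Q, sq_d Q}) \<in> cd_topology D PD (uo (sq11 C Q))"
        using squares Q unfolding covering_family_def by simp
      fix f g assume "f \<in> {sq_b Q, sq_d Q}" "g \<in> {sq_b Q, sq_d Q}"
      moreover from this sq have "g \<in> Arr C" "Cod C g = sq11 C Q"
        by auto
      ultimately show "\<exists>p1 p2. is_pullback C p1 p2 f g \<and> is_pullback D (um p1) (um p2) (um f) (um g)"
        using preserves_cover_pullbacksD[OF pullbacks elementary] by blast
    qed (use sq in auto)
  qed
qed

lemma squares_cover_if_continuous:
  assumes "inj (e :: 'n set \<Rightarrow> 'v)" "continuous_site TYPE('v) C (cd_topology C PC) D (cd_topology D PD) uo um"
  shows "\<forall>Q\<in>PC. covering_family D (cd_topology D PD) (uo (sq11 C Q)) {um (sq_b Q), um (sq_d Q)}"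
proof
  fix Q assume "Q \<in> PC"
  then have "covering_family C (cd_topology C PC) (sq11 C Q) {sq_b Q, sq_d Q}"
    unfolding covering_family_def using C.elementary_cover C.distinguished_squareD by simp
  then have "covering_family D (cd_topology D PD) (uo (sq11 C Q)) (um ` {sq_b Q, sq_d Q})"
    by (rule covering_family_image_if_continuous[OF C.cd_topology_is_topology D.cd_topology_is_topology assms])
  then show "covering_family D (cd_topology D PD) (uo (sq11 C Q)) {um (sq_b Q), um (sq_d Q)}"
    by simp
qed

lemma map_sq_sq_b: "map_sq um Q' = Q \<Longrightarrow> sq_b Q = um (sq_b Q')"
  and map_sq_sq_d: "map_sq um Q' = Q \<Longrightarrow> sq_d Q = um (sq_d Q')"
  by (cases Q', auto)+

context
  assumes lift: "\<forall>X'\<in>Obj C. \<forall>Q\<in>PD. sq11 D Q = uo X' \<longrightarrow> (\<exists>Q'\<in>PC. map_sq um Q' = Q \<and> sq11 C Q' = X')"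
begin

lemma lift_simple_cover:
  "simple_cover D PD Y R0 \<Longrightarrow> X \<in> Obj C \<Longrightarrow> uo X = Y \<Longrightarrow>
    \<exists>R. simple_cover C PC X R \<and> um ` R \<subseteq> sieve_gen D R0"
proof (induction arbitrary: X rule: simple_cover.induct)
  case (iso f)
  have "simple_cover C PC X {Idm C X}"
    using simple_cover.iso[OF C.is_iso_Idm[OF iso.prems(1)]] iso.prems(1) by simp
  moreover have "Cod D f \<in> Obj D"
    using uo_in_Obj[OF iso.prems(1)] iso.prems(2) by simp
  then have "um (Idm C X) \<in> sieve_gen D {f}"
    using D.sieve_gen_iso[OF iso.hyps] iso.prems unfolding max_sieve_def by simp
  ultimately show ?case
    by blast
next
  case (step Q R1 R2)
  obtain Q' where Q': "Q' \<in> PC" "map_sq um Q' = Q" "sq11 C Q' = X"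
    using lift step.hyps(1) step.prems(1) step.prems(2)[symmetric] by blast
  note sqC = C.distinguished_squareD[OF Q'(1)] and sqD = D.distinguished_squareD[OF step.hyps(1)]
  note b_eq = map_sq_sq_b[OF Q'(2)] and d_eq = map_sq_sq_d[OF Q'(2)]
  have sides: "sq01 C Q' \<in> Obj C" "uo (sq01 C Q') = sq01 D Q"
    "sq10 C Q' \<in> Obj C" "uo (sq10 C Q') = sq10 D Q"
    using C.Dom_in_Obj[OF sqC(1)] C.Dom_in_Obj[OF sqC(2)] Dom_um[OF sqC(1)] Dom_um[OF sqC(2)] sqC sqD b_eq d_eq
    by simp_all
  obtain R1' where R1': "simple_cover C PC (sq01 C Q') R1'" "um ` R1' \<subseteq> sieve_gen D R1"
    using step.IH(1)[OF sides(1,2)] by blast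
  obtain R2' where R2': "simple_cover C PC (sq10 C Q') R2'" "um ` R2' \<subseteq> sieve_gen D R2"
    using step.IH(2)[OF sides(3,4)] by blast
  define R where "R = Comp C (sq_b Q') ` R1' \<union> Comp C (sq_d Q') ` R2'"
  define R0 where "R0 = Comp D (sq_b Q) ` R1 \<union> Comp D (sq_d Q) ` R2"
  have cover: "simple_cover C PC X R"
    unfolding R_def using simple_cover.step[OF Q'(1) R1'(1) R2'(1)] Q'(3) by simp
  have b_side: "um ` Comp C (sq_b Q') ` R1' \<subseteq> sieve_gen D (Comp D (sq_b Q) ` R1)"
    unfolding b_eq
    by (rule um_Comp_image_subset)
      (use sqC sides C.simple_cover_arrows[OF R1'(1)] R1'(2) D.simple_cover_arrows[OF step.hyps(2)] in auto)
  have d_side: "um ` Comp C (sq_d Q') ` R2' \<subseteq> sieve_gen D (Comp D (sq_d Q) ` R2)"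
    unfolding d_eq
    by (rule um_Comp_image_subset)
      (use sqC sides C.simple_cover_arrows[OF R2'(1)] R2'(2) D.simple_cover_arrows[OF step.hyps(3)] in auto)
  have "um ` R \<subseteq> sieve_gen D R0"
    using b_side d_side D.sieve_gen_mono[of "Comp D (sq_b Q) ` R1" R0]
      D.sieve_gen_mono[of "Comp D (sq_d Q) ` R2" R0]
    unfolding R_def R0_def by blast
  with cover show ?case
    unfolding R0_def by blast
qed

lemma cocontinuous_if_squares_lift:
  assumes complete: "cd_complete D PD"
  shows "cocontinuous_site C (cd_topology C PC) D (cd_topology D PD) uo um"
  unfolding cocontinuous_site_def
proof (intro ballI allI impI)
  fix X R assume X: "X \<in> Obj C" and R: "covering_family D (cd_topology D PD) (uo X) R"
  then obtain R0 where R0: "simple_cover D PD (uo X) R0" "sieve_gen D R0 \<subseteq> sieve_gen D R"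
    using complete unfolding cd_complete_def covering_family_def by blast
  then obtain R' where R': "simple_cover C PC X R'" "um ` R' \<subseteq> sieve_gen D R0"
    using lift_simple_cover X by blast
  have "\<exists>f\<in>R. \<exists>h\<in>Arr D. Cod D h = Dom D f \<and> um g = Comp D f h" if "g \<in> R'" for g
    using that R' R0(2) unfolding sieve_gen_def by blast
  with R' show "\<exists>R'. covering_family C (cd_topology C PC) X R' \<and>
      (\<forall>g\<in>R'. \<exists>f\<in>R. \<exists>h\<in>Arr D. Cod D h = Dom D f \<and> um g = Comp D f h)"
    using C.simple_cover_covering by blast
qed

end

end

theorem lemmaA2p1:
  fixes C :: "('o,'m) cat" and D :: "('p,'n) cat"
    and PC :: "'m square set" and PD :: "'n square set"
    and uo :: "'o \<Rightarrow> 'p" and um :: "'m \<Rightarrow> 'n"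
  assumes "is_cat C" and "is_cat D"
    and "cd_structure C PC" and "cd_structure D PD"
    and "is_functor C D uo um"
  shows
   "(cd_complete C PC \<and> preserves_cover_pullbacks C (cd_topology C PC) D um \<and>
     (\<exists>e :: 'n set \<Rightarrow> 'v. inj e) \<longrightarrow>
       (continuous_site TYPE('v) C (cd_topology C PC) D (cd_topology D PD) uo um \<longleftrightarrow>
        (\<forall>Q\<in>PC. covering_family D (cd_topology D PD) (uo (sq11 C Q)) {um (sq_b Q), um (sq_d Q)})))
    \<and>
    (cd_complete D PD \<and>
     (\<forall>X'\<in>Obj C. \<forall>Q\<in>PD. sq11 D Q = uo X' \<longrightarrow>
        (\<exists>Q'\<in>PC. map_sq um Q' = Q \<and> sq11 C Q' = X')) \<longrightarrow>
       cocontinuous_site C (cd_topology C PC) D (cd_topology D PD) uo um)"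
proof -
  interpret cd_functor C D uo um PC PD
    using assms by unfold_locales
  show ?thesis
    using squares_cover_if_continuous continuous_if_squares_cover cocontinuous_if_squares_lift by blast
qed

end
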